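(* Let $p$ be a prime with $p\equiv 1\pmod 3$, let $H_p=\mathrm{PSL}_2(F_p)$, let $A_p=\{(x_i)\in F_3^{p+1}\mid \sum_{i=1}^{p+1}x_i=0\}$ and $G_p=A_p\rtimes H_p$ (as defined in the context). Let $K$ be a group and let $N<G_p\times K$ be a subgroup which is normalized by $G_p\times\{e\}$. Then $N$ is equal to $\{e\}\times L$, $A_p\times L$ or $G_p\times L$, for some subgroup $L<K$.
   Context: $F_q$ denotes the field with $q$ elements. $\mathrm{PSL}_2(F_p)=\mathrm{SL}_2(F_p)/\{\pm I\}$ acts on the projective line $\mathrm{P}^1(F_p)=F_p\cup\{\infty\}$ by linear fractional transformations $\begin{pmatrix}a&b\\c&d\end{pmatrix}\cdot x=\frac{ax+b}{cx+d}$. This induces the permutational representation of $\mathrm{PSL}_2(F_p)$ on $F_3^{\mathrm{P}^1(F_p)}$ given by $g\cdot x=(x_{g^{-1}\cdot i})_{i\in\mathrm{P}^1(F_p)}$. One identifies $F_3^{\mathrm{P}^1(F_p)}$ with $F_3^{p+1}$ via a fixed bijection $\mathrm{P}^1(F_p)\rightarrow\{1,\dots,p+1\}$ sending $\infty$ to $p+1$. The subspace $A_p$ (vectors with coordinate sum $0$) is $H_p$-invariant, and $G_p=A_p\rtimes H_p$ is the corresponding semidirect product, with $A_p$ and $H_p$ viewed as subgroups of $G_p$. *)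

theory Defs
  imports "HOL-Computational_Algebra.Primes" "HOL-Algebra.Coset"
begin

text \<open>Elements of F_p are represented by integers in {0..<p}.
  A 2x2 matrix (a b; c d) is the tuple (a,b,c,d).\<close>

type_synonym mat2 = "int \<times> int \<times> int \<times> int"

fun mat_mult :: "nat \<Rightarrow> mat2 \<Rightarrow> mat2 \<Rightarrow> mat2" where
  "mat_mult p (a,b,c,d) (e,f,g,h) =
     ((a*e + b*g) mod int p, (a*f + b*h) mod int p,
      (c*e + d*g) mod int p, (c*f + d*h) mod int p)"

definition SL2 :: "nat \<Rightarrow> mat2 monoid" where
  "SL2 p = \<lparr> carrier = {(a,b,c,d). a \<in> {0..<int p} \<and> b \<in> {0..<int p} \<and> c \<in> {0..<int p}
                          \<and> d \<in> {0..<int p} \<and> (a*d - c*b) mod int p = 1 mod int p},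
             mult = mat_mult p,
             one = (1 mod int p, 0, 0, 1 mod int p) \<rparr>"

definition centre_pm :: "nat \<Rightarrow> mat2 set" where
  "centre_pm p = {(1 mod int p, 0, 0, 1 mod int p), ((-1) mod int p, 0, 0, (-1) mod int p)}"

definition PSL2 :: "nat \<Rightarrow> mat2 set monoid" where
  "PSL2 p = SL2 p Mod centre_pm p"

text \<open>P^1(F_p) = F_p \<union> {\<infinity>} is represented by {0..p} (natural numbers), where
  the point p stands for \<infinity>. (This is the fixed bijection P^1(F_p) \<rightarrow> {1,...,p+1},
  shifted by one, sending \<infinity> to the last index.)\<close>

definition fdiv :: "nat \<Rightarrow> int \<Rightarrow> int \<Rightarrow> nat" where
  "fdiv p u v = nat (THE y. y \<in> {0..<int p} \<and> (y * v) mod int p = u mod int p)"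

definition mobius :: "nat \<Rightarrow> mat2 \<Rightarrow> nat \<Rightarrow> nat" where
  "mobius p M x = (case M of (a,b,c,d) \<Rightarrow>
     if x = p then (if c mod int p = 0 then p else fdiv p a c)
     else (if (c * int x + d) mod int p = 0 then p
           else fdiv p (a * int x + b) (c * int x + d)))"

definition psl_act :: "nat \<Rightarrow> mat2 set \<Rightarrow> nat \<Rightarrow> nat" where
  "psl_act p g x = mobius p (SOME M. M \<in> g) x"

text \<open>Vectors in F_3^{P^1(F_p)}: functions with values in {0,1,2}, extended by 0
  outside the index set {0..p}.\<close>
definition A_p :: "nat \<Rightarrow> (nat \<Rightarrow> int) set" where
  "A_p p = {x. (\<forall>i. x i \<in> {0..<3}) \<and> (\<forall>i. i > p \<longrightarrow> x i = 0)
              \<and> (\<Sum>i\<le>p. x i) mod 3 = 0}"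

definition perm_act :: "nat \<Rightarrow> mat2 set \<Rightarrow> (nat \<Rightarrow> int) \<Rightarrow> (nat \<Rightarrow> int)" where
  "perm_act p g x = (\<lambda>i. if i \<le> p then x (psl_act p (inv\<^bsub>PSL2 p\<^esub> g) i) else 0)"

definition G_p :: "nat \<Rightarrow> ((nat \<Rightarrow> int) \<times> mat2 set) monoid" where
  "G_p p = \<lparr> carrier = A_p p \<times> carrier (PSL2 p),
            mult = (\<lambda>u v. ((\<lambda>i. (fst u i + perm_act p (snd u) (fst v) i) mod 3),
                             snd u \<otimes>\<^bsub>PSL2 p\<^esub> snd v)),
            one = (\<lambda>i. 0, \<one>\<^bsub>PSL2 p\<^esub>) \<rparr>"

definition A_sub :: "nat \<Rightarrow> ((nat \<Rightarrow> int) \<times> mat2 set) set" where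
  "A_sub p = A_p p \<times> {\<one>\<^bsub>PSL2 p\<^esub>}"

end

theory Submission
  imports Defs
begin

text \<open>
  The group \<open>G\<^sub>p\<close> has exactly three normal subgroups, \<open>1 < A\<^sub>p < G\<^sub>p\<close>. A normal subgroup
  meeting \<open>A\<^sub>p\<close> trivially commutes with \<open>A\<^sub>p\<close>, so its elements act trivially on \<open>A\<^sub>p\<close> and
  hence on the projective line, which forces it to be trivial. One meeting \<open>A\<^sub>p\<close> nontrivially
  contains \<open>A\<^sub>p\<close>, because \<open>A\<^sub>p\<close> is an irreducible \<open>F\<^sub>3[PSL\<^sub>2(F\<^sub>p)]\<close>-module when
  \<open>p \<equiv> 1 (mod 3)\<close>: summing the translates \<open>x \<mapsto> x + t\<close> of a nonzero vector gives
  \<open>(2, \<dots>, 2, 1)\<close>, whose orbit spans \<open>A\<^sub>p\<close>. One properly containing \<open>A\<^sub>p\<close> meets the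
  complement \<open>PSL\<^sub>2(F\<^sub>p)\<close> in a nontrivial normal subgroup, hence in all of it, as
  \<open>PSL\<^sub>2(F\<^sub>p)\<close> is simple.

  For \<open>N \<le> G\<^sub>p \<times> K\<close> normalized by \<open>G\<^sub>p\<close>, the fiber \<open>{g. (g, 1) \<in> N}\<close> and the projection
  of \<open>N\<close> to \<open>G\<^sub>p\<close> are normal in \<open>G\<^sub>p\<close>, and \<open>G\<^sub>p\<close> centralizes the projection modulo the
  fiber. Since \<open>A\<^sub>p\<close> is not central and \<open>G\<^sub>p/A\<^sub>p \<cong> PSL\<^sub>2(F\<^sub>p)\<close> is not abelian, the two
  coincide, and then \<open>N\<close> is the product of the fiber with \<open>{k. (1, k) \<in> N}\<close>.
\<close>

section \<open>Subgroups of a direct product normalized by the first factor\<close>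

locale left_normalized_subgroup =
  G: group G + K: group K + subgroup N "G \<times>\<times> K"
  for G :: "('g, 'a) monoid_scheme" and K :: "('k, 'b) monoid_scheme" and N +
  assumes normalized: "\<forall>g \<in> carrier G. \<forall>n \<in> N.
    (g, \<one>\<^bsub>K\<^esub>) \<otimes>\<^bsub>G \<times>\<times> K\<^esub> n \<otimes>\<^bsub>G \<times>\<times> K\<^esub> inv\<^bsub>G \<times>\<times> K\<^esub> (g, \<one>\<^bsub>K\<^esub>) \<in> N"
begin

lemma mem_carrier: "(g, k) \<in> N \<Longrightarrow> g \<in> carrier G \<and> k \<in> carrier K"
  using subset by auto

lemma pair_mult_closed: "(g, k) \<in> N \<Longrightarrow> (g', k') \<in> N \<Longrightarrow> (g \<otimes>\<^bsub>G\<^esub> g', k \<otimes>\<^bsub>K\<^esub> k') \<in> N"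
  using m_closed by fastforce

lemma pair_inv_closed: "(g, k) \<in> N \<Longrightarrow> (inv\<^bsub>G\<^esub> g, inv\<^bsub>K\<^esub> k) \<in> N"
  using m_inv_closed mem_carrier inv_DirProd[OF G.group_axioms K.group_axioms] by fastforce

lemma pair_conj_closed:
  assumes "g \<in> carrier G" and "(a, k) \<in> N"
  shows "(g \<otimes>\<^bsub>G\<^esub> a \<otimes>\<^bsub>G\<^esub> inv\<^bsub>G\<^esub> g, k) \<in> N"
  using normalized assms mem_carrier[OF assms(2)]
    inv_DirProd[OF G.group_axioms K.group_axioms assms(1) K.one_closed] by force

lemma fiber_normal: "{g. (g, \<one>\<^bsub>K\<^esub>) \<in> N} \<lhd> G"
proof -
  have "subgroup {g. (g, \<one>\<^bsub>K\<^esub>) \<in> N} G"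
    by (rule G.subgroupI) (use one_closed mem_carrier pair_mult_closed pair_inv_closed in fastforce)+
  then show ?thesis
    using pair_conj_closed by (auto simp: G.normal_inv_iff)
qed

lemma projection_normal: "fst ` N \<lhd> G"
proof -
  have "subgroup (fst ` N) G"
  proof (rule G.subgroupI)
    show "fst ` N \<subseteq> carrier G" "fst ` N \<noteq> {}"
      using mem_carrier one_closed by force+
  next
    fix a b assume "a \<in> fst ` N" "b \<in> fst ` N"
    then show "inv\<^bsub>G\<^esub> a \<in> fst ` N" "a \<otimes>\<^bsub>G\<^esub> b \<in> fst ` N"
      using pair_inv_closed pair_mult_closed by (force intro: image_eqI)+
  qed
  then show ?thesis
    using pair_conj_closed by (force simp: G.normal_inv_iff intro: image_eqI)
qed

lemma right_fiber_subgroup: "subgroup {k. (\<one>\<^bsub>G\<^esub>, k) \<in> N} K"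
  by (rule K.subgroupI) (use one_closed mem_carrier pair_mult_closed pair_inv_closed in fastforce)+

lemma commutator_in_fiber:
  assumes "a \<in> fst ` N" and "g \<in> carrier G"
  shows "g \<otimes>\<^bsub>G\<^esub> a \<otimes>\<^bsub>G\<^esub> inv\<^bsub>G\<^esub> g \<otimes>\<^bsub>G\<^esub> inv\<^bsub>G\<^esub> a \<in> {g. (g, \<one>\<^bsub>K\<^esub>) \<in> N}"
proof -
  obtain k where ak: "(a, k) \<in> N" using assms(1) by force
  then show ?thesis
    using pair_mult_closed[OF pair_conj_closed[OF assms(2) ak] pair_inv_closed[OF ak]] mem_carrier
    by simp
qed

lemma eq_Times_if_projection_eq_fiber:
  assumes "fst ` N = {g. (g, \<one>\<^bsub>K\<^esub>) \<in> N}"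
  shows "N = {g. (g, \<one>\<^bsub>K\<^esub>) \<in> N} \<times> {k. (\<one>\<^bsub>G\<^esub>, k) \<in> N}"
proof (intro equalityI subsetI)
  fix n assume n: "n \<in> N"
  obtain g k where gk: "n = (g, k)" by fastforce
  have g: "(g, \<one>\<^bsub>K\<^esub>) \<in> N" using assms n gk by force
  have "(inv\<^bsub>G\<^esub> g \<otimes>\<^bsub>G\<^esub> g, inv\<^bsub>K\<^esub> \<one>\<^bsub>K\<^esub> \<otimes>\<^bsub>K\<^esub> k) \<in> N"
    using pair_mult_closed[OF pair_inv_closed[OF g]] n gk by simp
  then show "n \<in> {g. (g, \<one>\<^bsub>K\<^esub>) \<in> N} \<times> {k. (\<one>\<^bsub>G\<^esub>, k) \<in> N}"
    using g gk mem_carrier n by auto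
next
  fix n assume "n \<in> {g. (g, \<one>\<^bsub>K\<^esub>) \<in> N} \<times> {k. (\<one>\<^bsub>G\<^esub>, k) \<in> N}"
  then obtain g k where gk: "n = (g, k)" "(g, \<one>\<^bsub>K\<^esub>) \<in> N" "(\<one>\<^bsub>G\<^esub>, k) \<in> N"
    by auto
  then show "n \<in> N"
    using pair_mult_closed[OF gk(2,3)] mem_carrier by simp
qed

lemma conj_eq_if_fiber_trivial:
  assumes "{g. (g, \<one>\<^bsub>K\<^esub>) \<in> N} = {\<one>\<^bsub>G\<^esub>}" and a: "a \<in> fst ` N" and g: "g \<in> carrier G"
  shows "g \<otimes>\<^bsub>G\<^esub> a \<otimes>\<^bsub>G\<^esub> inv\<^bsub>G\<^esub> g = a"
proof -
  have a_carrier: "a \<in> carrier G" using a mem_carrier by force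
  have "g \<otimes>\<^bsub>G\<^esub> a \<otimes>\<^bsub>G\<^esub> inv\<^bsub>G\<^esub> g \<otimes>\<^bsub>G\<^esub> inv\<^bsub>G\<^esub> a = \<one>\<^bsub>G\<^esub>"
    using commutator_in_fiber[OF a g] assms(1) by blast
  then have "inv\<^bsub>G\<^esub> (inv\<^bsub>G\<^esub> a) = g \<otimes>\<^bsub>G\<^esub> a \<otimes>\<^bsub>G\<^esub> inv\<^bsub>G\<^esub> g"
    using g a_carrier by (intro G.inv_equality) auto
  then show ?thesis using a_carrier by simp
qed

context
  fixes A
  assumes normal_subgroups: "\<And>M. M \<lhd> G \<Longrightarrow> M = {\<one>\<^bsub>G\<^esub>} \<or> M = A \<or> M = carrier G"
    and A_normal: "A \<lhd> G"
    and A_noncentral: "\<exists>g \<in> carrier G. \<exists>a \<in> A. g \<otimes>\<^bsub>G\<^esub> a \<otimes>\<^bsub>G\<^esub> inv\<^bsub>G\<^esub> g \<noteq> a"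
    and quotient_nonabelian: "\<exists>g \<in> carrier G. \<exists>h \<in> carrier G.
      g \<otimes>\<^bsub>G\<^esub> h \<otimes>\<^bsub>G\<^esub> inv\<^bsub>G\<^esub> g \<otimes>\<^bsub>G\<^esub> inv\<^bsub>G\<^esub> h \<notin> A"
begin

lemma projection_eq_fiber: "fst ` N = {g. (g, \<one>\<^bsub>K\<^esub>) \<in> N}"
proof -
  let ?F = "{g. (g, \<one>\<^bsub>K\<^esub>) \<in> N}" and ?P = "fst ` N"
  have FP: "?F \<subseteq> ?P" by force
  have P: "?P = {\<one>\<^bsub>G\<^esub>} \<or> ?P = A \<or> ?P = carrier G"
    using normal_subgroups[OF projection_normal] .
  have "subgroup A G" using A_normal by (rule normal_imp_subgroup)
  then have A: "A \<subseteq> carrier G" by (rule subgroup.subset)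
  obtain g0 a0 where g0: "g0 \<in> carrier G" and a0: "a0 \<in> A"
    and conj_a0: "g0 \<otimes>\<^bsub>G\<^esub> a0 \<otimes>\<^bsub>G\<^esub> inv\<^bsub>G\<^esub> g0 \<noteq> a0"
    using A_noncentral by blast
  consider "?F = {\<one>\<^bsub>G\<^esub>}" | "?F = A" | "?F = carrier G"
    using normal_subgroups[OF fiber_normal] by blast
  then show ?thesis
  proof cases
    case 1
    then have "a0 \<notin> ?P" using conj_eq_if_fiber_trivial g0 conj_a0 by blast
    then have "?P = {\<one>\<^bsub>G\<^esub>}" using P A a0 by auto
    then show ?thesis using 1 by simp
  next
    case 2
    obtain g h where "g \<in> carrier G" "h \<in> carrier G"
      "g \<otimes>\<^bsub>G\<^esub> h \<otimes>\<^bsub>G\<^esub> inv\<^bsub>G\<^esub> g \<otimes>\<^bsub>G\<^esub> inv\<^bsub>G\<^esub> h \<notin> A"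
      using quotient_nonabelian by blast
    with 2 have "?P \<noteq> carrier G"
      using commutator_in_fiber by blast
    moreover have "a0 \<noteq> \<one>\<^bsub>G\<^esub>" using conj_a0 g0 by auto
    then have "?P \<noteq> {\<one>\<^bsub>G\<^esub>}" using 2 FP a0 by blast
    ultimately show ?thesis using P 2 by blast
  next
    case 3
    then show ?thesis using FP mem_carrier by auto
  qed
qed

theorem product_form_if_normal_subgroups_chain:
  "\<exists>L. subgroup L K \<and> (N = {\<one>\<^bsub>G\<^esub>} \<times> L \<or> N = A \<times> L \<or> N = carrier G \<times> L)"
proof -
  have "N = {g. (g, \<one>\<^bsub>K\<^esub>) \<in> N} \<times> {k. (\<one>\<^bsub>G\<^esub>, k) \<in> N}"
    by (rule eq_Times_if_projection_eq_fiber[OF projection_eq_fiber])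
  then show ?thesis
    using normal_subgroups[OF fiber_normal] right_fiber_subgroup by auto
qed

end

end

section \<open>The module \<open>A\<^sub>p\<close> and the group law of \<open>G\<^sub>p\<close>\<close>

lemma A_pI:
  "(\<And>i. 0 \<le> x i \<and> x i < 3) \<Longrightarrow> (\<And>i. i > p \<Longrightarrow> x i = 0) \<Longrightarrow> (\<Sum>i\<le>p. x i) mod 3 = 0
     \<Longrightarrow> x \<in> A_p p"
  by (auto simp: A_p_def)

lemma A_p_range: "x \<in> A_p p \<Longrightarrow> 0 \<le> x i \<and> x i < 3"
  by (auto simp: A_p_def)

lemma A_p_mod: "x \<in> A_p p \<Longrightarrow> x i mod 3 = x i"
  using A_p_range by simp

lemma A_p_outside: "x \<in> A_p p \<Longrightarrow> i > p \<Longrightarrow> x i = 0"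
  by (auto simp: A_p_def)

lemma A_p_sum: "x \<in> A_p p \<Longrightarrow> (\<Sum>i\<le>p. x i) mod 3 = 0"
  by (auto simp: A_p_def)

lemma A_p_zero: "(\<lambda>i. 0) \<in> A_p p"
  by (rule A_pI) simp_all

lemma A_p_add: "x \<in> A_p p \<Longrightarrow> y \<in> A_p p \<Longrightarrow> (\<lambda>i. (x i + y i) mod 3) \<in> A_p p"
proof (rule A_pI)
  assume x: "x \<in> A_p p" and y: "y \<in> A_p p"
  show "(x i + y i) mod 3 = 0" if "i > p" for i using x y that by (simp add: A_p_outside)
  have "(\<Sum>i\<le>p. (x i + y i) mod 3) mod 3 = (\<Sum>i\<le>p. x i + y i) mod 3"
    by (rule mod_sum_eq)
  also have "\<dots> = ((\<Sum>i\<le>p. x i) mod 3 + (\<Sum>i\<le>p. y i) mod 3) mod 3"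
    by (simp add: sum.distrib mod_add_eq)
  finally show "(\<Sum>i\<le>p. (x i + y i) mod 3) mod 3 = 0" using A_p_sum[OF x] A_p_sum[OF y] by simp
qed simp

lemma A_p_neg: "x \<in> A_p p \<Longrightarrow> (\<lambda>i. (- x i) mod 3) \<in> A_p p"
proof (rule A_pI)
  assume x: "x \<in> A_p p"
  show "(- x i) mod 3 = 0" if "i > p" for i using x that by (simp add: A_p_outside)
  have "(\<Sum>i\<le>p. (- x i) mod 3) mod 3 = (\<Sum>i\<le>p. - x i) mod 3"
    by (rule mod_sum_eq)
  also have "\<dots> = (- ((\<Sum>i\<le>p. x i) mod 3)) mod 3"
    by (simp add: sum_negf mod_minus_eq)
  finally show "(\<Sum>i\<le>p. (- x i) mod 3) mod 3 = 0" using A_p_sum[OF x] by simp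
qed simp

lemma G_p_mult:
  "(x, h) \<otimes>\<^bsub>G_p p\<^esub> (y, k) = ((\<lambda>i. (x i + perm_act p h y i) mod 3), h \<otimes>\<^bsub>PSL2 p\<^esub> k)"
  by (simp add: G_p_def)

lemma G_p_one: "\<one>\<^bsub>G_p p\<^esub> = (\<lambda>i. 0, \<one>\<^bsub>PSL2 p\<^esub>)"
  by (simp add: G_p_def)

lemma G_p_carrier: "carrier (G_p p) = A_p p \<times> carrier (PSL2 p)"
  by (simp add: G_p_def)

definition add_closed_mod3 :: "(nat \<Rightarrow> int) set \<Rightarrow> bool" where
  "add_closed_mod3 S \<longleftrightarrow> (\<lambda>i. 0) \<in> S \<and> (\<forall>a \<in> S. \<forall>b \<in> S. (\<lambda>i. (a i + b i) mod 3) \<in> S)"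

lemma add_closed_mod3_sum:
  fixes n :: nat
  assumes S: "add_closed_mod3 S" and f: "\<And>t. t < n \<Longrightarrow> f t \<in> S"
  shows "(\<lambda>i. (\<Sum>t<n. f t i) mod 3) \<in> S"
  using f
proof (induction n)
  case 0
  then show ?case using S by (simp add: add_closed_mod3_def)
next
  case (Suc n)
  then have "(\<lambda>i. ((\<Sum>t<n. f t i) mod 3 + f n i) mod 3) \<in> S"
    using S unfolding add_closed_mod3_def by simp
  then show ?case by (simp add: mod_simps add.commute)
qed

lemma add_closed_mod3_multiple:
  assumes "add_closed_mod3 S" and "a \<in> S"
  shows "(\<lambda>i. (int c * a i) mod 3) \<in> S"
  using add_closed_mod3_sum[OF assms(1), of c "\<lambda>_. a"] assms(2) by simp

text \<open>Every \<open>a \<in> A\<^sub>p\<close> is \<open>\<Sum>j<p. a j \<cdot> v j\<close>: at the point \<open>p\<close> this reads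
  \<open>2 \<cdot> (\<Sum>j<p. a j) \<equiv> a p\<close>, which holds because the coordinates of \<open>a\<close> sum to \<open>0\<close> mod 3.\<close>
lemma A_p_subset_if_contains_basis:
  assumes S: "add_closed_mod3 S"
    and basis: "\<And>j. j < p \<Longrightarrow> (\<lambda>i. if i = j then 1 else if i = p then 2 else 0) \<in> S"
  shows "A_p p \<subseteq> S"
proof
  fix a assume a: "a \<in> A_p p"
  define v where "v j = (\<lambda>i. if i = j then 1 else if i = p then 2 else (0::int))" for j
  have "(\<lambda>i. (int (nat (a j)) * v j i) mod 3) \<in> S" if "j < p" for j
    unfolding v_def by (rule add_closed_mod3_multiple[OF S basis[OF that]])
  then have "(\<lambda>i. (\<Sum>j<p. (int (nat (a j)) * v j i) mod 3) mod 3) \<in> S"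
    by (rule add_closed_mod3_sum[OF S])
  moreover have "(\<Sum>j<p. (int (nat (a j)) * v j i) mod 3) mod 3 = a i" for i
  proof -
    have "(\<Sum>j<p. (int (nat (a j)) * v j i) mod 3) mod 3 = (\<Sum>j<p. a j * v j i) mod 3"
      using A_p_range[OF a] by (simp add: mod_sum_eq)
    also have "\<dots> = a i"
    proof (cases "i < p")
      case True
      then show ?thesis by (simp add: v_def A_p_mod[OF a] if_distrib[of "(*) _"] cong: if_cong)
    next
      case False
      have "(\<Sum>j<p. a j) + a p = (\<Sum>j\<le>p. a j)" by (simp add: lessThan_Suc_atMost[symmetric])
      then have "((\<Sum>j<p. a j) + a p) mod 3 = 0" using A_p_sum[OF a] by simp
      moreover have "(s + x) mod 3 = 0 \<Longrightarrow> (2 * s) mod 3 = x mod 3" for s x :: int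
        by presburger
      ultimately have "(2 * (\<Sum>j<p. a j)) mod 3 = a p mod 3" by metis
      moreover have "(\<Sum>j<p. a j * v j p) = 2 * (\<Sum>j<p. a j)"
        by (simp add: v_def sum_distrib_left mult.commute)
      ultimately show ?thesis
        using False A_p_mod[OF a] A_p_outside[OF a] by (cases "i = p") (simp_all add: v_def)
    qed
    finally show ?thesis .
  qed
  ultimately show "a \<in> S" by simp
qed

section \<open>\<open>SL\<^sub>2(F\<^sub>p)\<close> and \<open>PSL\<^sub>2(F\<^sub>p)\<close>\<close>

lemma mod_add_mult_mod:
  "(x mod m * (y mod m) + z mod m * (w mod m)) mod m = (x * y + z * w) mod (m :: int)"
  by (metis mod_add_eq mod_mult_eq)

lemma mod_diff_mult_mod:
  "(x mod m * (y mod m) - z mod m * (w mod m)) mod m = (x * y - z * w) mod (m :: int)"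
  by (metis mod_diff_eq mod_mult_eq)

locale prime_modulus =
  fixes p :: nat
  assumes prime: "prime p"
begin

lemma p_gt_1: "1 < p"
  using prime prime_gt_1_nat by blast

lemma prime_int: "prime (int p)"
  using prime by simp

lemma dvd_mult_iff: "int p dvd a * b \<longleftrightarrow> int p dvd a \<or> int p dvd b"
  using prime_int prime_dvd_mult_iff by blast

lemma not_dvd_small: "0 < x \<Longrightarrow> x < int p \<Longrightarrow> \<not> int p dvd x"
  using zdvd_imp_le by fastforce

lemma not_dvd_one: "\<not> int p dvd 1"
  using not_dvd_small p_gt_1 by simp

lemma exists_inverse: "\<not> int p dvd c \<Longrightarrow> \<exists>c'. int p dvd (c * c' - 1)"
proof -
  assume "\<not> int p dvd c"
  then have "coprime (int p) c" using prime_int prime_imp_coprime by blast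
  then obtain u v where "u * int p + v * c = 1" using bezout_int[of "int p" c] by auto
  then have "c * v - 1 = int p * (- u)" by (simp add: algebra_simps)
  then show ?thesis by (metis dvd_triv_left)
qed

lemma eq_if_dvd_diff:
  "0 \<le> y \<Longrightarrow> y < int p \<Longrightarrow> 0 \<le> y' \<Longrightarrow> y' < int p \<Longrightarrow> int p dvd (y - y') \<Longrightarrow> y = y'"
  by (metis mod_eq_dvd_iff mod_pos_pos_trivial)

lemma dvd_mod_diff: "int p dvd (x mod int p - x)"
  by (metis mod_eq_dvd_iff mod_mod_trivial)

text \<open>Entries are arbitrary integers reduced modulo \<open>p\<close>, so that identities between matrices
  become divisibility conditions (\<open>mat_eq_iff\<close>) that the \<open>algebra\<close> method can prove.\<close>
definition mat :: "int \<Rightarrow> int \<Rightarrow> int \<Rightarrow> int \<Rightarrow> mat2" where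
  "mat a b c d = (a mod int p, b mod int p, c mod int p, d mod int p)"

lemma mat_mult_mat:
  "mat_mult p (mat a b c d) (mat e f g h) = mat (a*e + b*g) (a*f + b*h) (c*e + d*g) (c*f + d*h)"
  by (simp add: mat_def mod_add_mult_mod)

lemma mat_eq_iff:
  "mat a b c d = mat a' b' c' d' \<longleftrightarrow>
     int p dvd (a - a') \<and> int p dvd (b - b') \<and> int p dvd (c - c') \<and> int p dvd (d - d')"
  by (simp add: mat_def mod_eq_dvd_iff)

lemma mat_in_SL2_iff: "mat a b c d \<in> carrier (SL2 p) \<longleftrightarrow> int p dvd (a*d - c*b - 1)"
proof -
  have "mat a b c d \<in> carrier (SL2 p) \<longleftrightarrow>
      (a mod int p * (d mod int p) - c mod int p * (b mod int p)) mod int p = 1 mod int p"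
    using p_gt_1 by (simp add: SL2_def mat_def)
  also have "\<dots> \<longleftrightarrow> (a*d - c*b) mod int p = 1 mod int p"
    by (simp only: mod_diff_mult_mod)
  finally show ?thesis by (simp add: mod_eq_dvd_iff)
qed

lemma SL2_cases:
  assumes "X \<in> carrier (SL2 p)"
  obtains a b c d where "X = mat a b c d" "int p dvd (a*d - c*b - 1)"
proof -
  obtain a b c d where X: "X = (a, b, c, d)" by (cases X) auto
  then have "X = mat a b c d" using assms by (auto simp: SL2_def mat_def)
  then show ?thesis using that assms mat_in_SL2_iff by blast
qed

lemma SL2_one: "\<one>\<^bsub>SL2 p\<^esub> = mat 1 0 0 1"
  by (simp add: SL2_def mat_def)

lemma SL2_mult: "X \<otimes>\<^bsub>SL2 p\<^esub> Y = mat_mult p X Y"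
  by (simp add: SL2_def)

lemma mat_adj_mult:
  "int p dvd (a*d - c*b - 1) \<Longrightarrow> mat_mult p (mat d (-b) (-c) a) (mat a b c d) = mat 1 0 0 1"
  unfolding mat_mult_mat mat_eq_iff
  by (intro conjI; ((simp add: algebra_simps; fail) | algebra))

lemma SL2_group: "group (SL2 p)"
proof (rule groupI)
  fix x y assume "x \<in> carrier (SL2 p)" "y \<in> carrier (SL2 p)"
  then obtain a b c d e f g h where x: "x = mat a b c d" "int p dvd (a*d - c*b - 1)"
    and y: "y = mat e f g h" "int p dvd (e*h - g*f - 1)" by (metis SL2_cases)
  have "int p dvd ((a*e + b*g) * (c*f + d*h) - (c*e + d*g) * (a*f + b*h) - 1)"
    using x(2) y(2) by algebra
  then show "x \<otimes>\<^bsub>SL2 p\<^esub> y \<in> carrier (SL2 p)"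
    using x y by (simp add: SL2_mult mat_mult_mat mat_in_SL2_iff)
next
  show "\<one>\<^bsub>SL2 p\<^esub> \<in> carrier (SL2 p)" by (simp add: SL2_one mat_in_SL2_iff)
next
  fix x y z assume "x \<in> carrier (SL2 p)" "y \<in> carrier (SL2 p)" "z \<in> carrier (SL2 p)"
  then obtain a b c d e f g h i j k l where "x = mat a b c d" "y = mat e f g h" "z = mat i j k l"
    by (metis SL2_cases)
  then show "x \<otimes>\<^bsub>SL2 p\<^esub> y \<otimes>\<^bsub>SL2 p\<^esub> z = x \<otimes>\<^bsub>SL2 p\<^esub> (y \<otimes>\<^bsub>SL2 p\<^esub> z)"
    by (simp add: SL2_mult mat_mult_mat algebra_simps)
next
  fix x assume "x \<in> carrier (SL2 p)"
  then obtain a b c d where x: "x = mat a b c d" "int p dvd (a*d - c*b - 1)" by (metis SL2_cases)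
  then show "\<one>\<^bsub>SL2 p\<^esub> \<otimes>\<^bsub>SL2 p\<^esub> x = x" by (simp add: SL2_mult SL2_one mat_mult_mat)
  have "mat d (-b) (-c) a \<in> carrier (SL2 p)" using x(2) by (simp add: mat_in_SL2_iff algebra_simps)
  then show "\<exists>y\<in>carrier (SL2 p). y \<otimes>\<^bsub>SL2 p\<^esub> x = \<one>\<^bsub>SL2 p\<^esub>"
    using mat_adj_mult[OF x(2)] x(1) by (auto simp: SL2_mult SL2_one)
qed

sublocale SL: group "SL2 p"
  by (rule SL2_group)

lemma SL2_inv_mat:
  assumes "int p dvd (a*d - c*b - 1)"
  shows "inv\<^bsub>SL2 p\<^esub> (mat a b c d) = mat d (-b) (-c) a"
  using SL.inv_equality[of "mat d (-b) (-c) a" "mat a b c d"] mat_adj_mult[OF assms] assms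
  by (simp add: mat_in_SL2_iff SL2_mult SL2_one algebra_simps)

definition scalar :: "int \<Rightarrow> mat2" where
  "scalar s = mat s 0 0 s"

lemma centre_pm_eq: "centre_pm p = {scalar 1, scalar (-1)}"
  by (simp add: centre_pm_def scalar_def mat_def)

lemma centre_pm_subgroup: "subgroup (centre_pm p) (SL2 p)"
proof -
  have sq: "int p dvd (s*s - 0*0 - 1)" if "s = 1 \<or> s = -1" for s :: int
    using that by auto
  show ?thesis
  proof (rule SL.subgroupI)
    show "centre_pm p \<subseteq> carrier (SL2 p)"
      unfolding centre_pm_eq scalar_def by (simp add: mat_in_SL2_iff)
    show "centre_pm p \<noteq> {}" by (simp add: centre_pm_eq)
  next
    fix x assume "x \<in> centre_pm p"
    then obtain s where "x = mat s 0 0 s" "s = 1 \<or> s = -1" by (auto simp: centre_pm_eq scalar_def)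
    then show "inv\<^bsub>SL2 p\<^esub> x \<in> centre_pm p"
      using SL2_inv_mat[OF sq] by (auto simp: centre_pm_eq scalar_def)
  next
    fix x y assume "x \<in> centre_pm p" "y \<in> centre_pm p"
    then obtain s t where "x = mat s 0 0 s" "s = 1 \<or> s = -1" "y = mat t 0 0 t" "t = 1 \<or> t = -1"
      by (auto simp: centre_pm_eq scalar_def)
    then show "x \<otimes>\<^bsub>SL2 p\<^esub> y \<in> centre_pm p"
      by (auto simp: centre_pm_eq scalar_def SL2_mult mat_mult_mat)
  qed
qed

lemma scalar_conj:
  "int p dvd (a*d - c*b - 1) \<Longrightarrow>
     mat_mult p (mat_mult p (mat a b c d) (scalar s)) (mat d (-b) (-c) a) = scalar s"
  unfolding scalar_def mat_mult_mat mat_eq_iff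
  by (intro conjI; ((simp add: algebra_simps; fail) | algebra))

lemma centre_pm_normal: "centre_pm p \<lhd> SL2 p"
proof -
  have "x \<otimes>\<^bsub>SL2 p\<^esub> scalar s \<otimes>\<^bsub>SL2 p\<^esub> inv\<^bsub>SL2 p\<^esub> x = scalar s"
    if "x \<in> carrier (SL2 p)" for x s
    using that by (cases rule: SL2_cases) (simp add: SL2_inv_mat SL2_mult scalar_conj)
  then show ?thesis
    using centre_pm_subgroup by (auto simp: SL.normal_inv_iff centre_pm_eq)
qed

lemma mat_in_centre_pm:
  assumes det: "int p dvd (a*d - c*b - 1)"
    and b: "int p dvd b" and c: "int p dvd c" and ad: "int p dvd (a - d)"
  shows "mat a b c d \<in> centre_pm p"
proof -
  have "int p dvd ((a - 1) * (a + 1))" using det b c ad by algebra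
  then consider "int p dvd (a - 1)" | "int p dvd (a + 1)" using dvd_mult_iff by blast
  then show ?thesis
  proof cases
    case 1
    then have "mat a b c d = scalar 1"
      unfolding scalar_def mat_eq_iff using b c ad by simp algebra
    then show ?thesis by (simp add: centre_pm_eq)
  next
    case 2
    then have "mat a b c d = scalar (-1)"
      unfolding scalar_def mat_eq_iff using b c ad by simp algebra
    then show ?thesis by (simp add: centre_pm_eq)
  qed
qed

lemma PSL2_group: "group (PSL2 p)"
  unfolding PSL2_def by (rule normal.factorgroup_is_group[OF centre_pm_normal])

sublocale PSL: group "PSL2 p"
  by (rule PSL2_group)

abbreviation pclass :: "mat2 \<Rightarrow> mat2 set" where
  "pclass X \<equiv> centre_pm p #>\<^bsub>SL2 p\<^esub> X"

lemma PSL2_carrier: "carrier (PSL2 p) = pclass ` carrier (SL2 p)"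
  by (simp add: PSL2_def carrier_FactGroup)

lemma PSL2_cases:
  assumes "g \<in> carrier (PSL2 p)"
  obtains X where "X \<in> carrier (SL2 p)" "g = pclass X"
  using assms PSL2_carrier by auto

lemma PSL2_mult_pclass:
  "X \<in> carrier (SL2 p) \<Longrightarrow> Y \<in> carrier (SL2 p) \<Longrightarrow>
     pclass X \<otimes>\<^bsub>PSL2 p\<^esub> pclass Y = pclass (X \<otimes>\<^bsub>SL2 p\<^esub> Y)"
  by (simp add: PSL2_def normal.rcos_sum[OF centre_pm_normal])

lemma pclass_eq_one_iff:
  assumes "X \<in> carrier (SL2 p)"
  shows "pclass X = \<one>\<^bsub>PSL2 p\<^esub> \<longleftrightarrow> X \<in> centre_pm p"
proof -
  interpret normal "centre_pm p" "SL2 p" by (rule centre_pm_normal)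
  have "\<one>\<^bsub>PSL2 p\<^esub> = centre_pm p" by (simp add: PSL2_def)
  then show ?thesis
    using SL.rcos_self[OF assms subgroup_axioms] rcos_const[OF SL2_group] by metis
qed

lemma PSL2_one: "\<one>\<^bsub>PSL2 p\<^esub> = pclass \<one>\<^bsub>SL2 p\<^esub>"
proof -
  interpret normal "centre_pm p" "SL2 p" by (rule centre_pm_normal)
  have "\<one>\<^bsub>SL2 p\<^esub> \<in> centre_pm p" by (simp add: centre_pm_eq scalar_def SL2_one)
  then show ?thesis by (simp add: PSL2_def rcos_const)
qed

lemma PSL2_inv_pclass:
  assumes "X \<in> carrier (SL2 p)"
  shows "inv\<^bsub>PSL2 p\<^esub> (pclass X) = pclass (inv\<^bsub>SL2 p\<^esub> X)"
proof -
  interpret normal "centre_pm p" "SL2 p" by (rule centre_pm_normal)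
  show ?thesis
    using inv_FactGroup[of "pclass X"] rcos_inv[OF assms] assms
    by (simp add: PSL2_def carrier_FactGroup)
qed

lemma pclass_cases:
  assumes "M \<in> pclass X"
  obtains s where "s = 1 \<or> s = -1" "M = scalar s \<otimes>\<^bsub>SL2 p\<^esub> X"
  using assms unfolding r_coset_def centre_pm_eq by auto

section \<open>The action on the projective line\<close>

lemma fdiv_spec:
  assumes "\<not> int p dvd v"
  shows "fdiv p u v < p \<and> int p dvd (int (fdiv p u v) * v - u)"
proof -
  obtain v' where v': "int p dvd (v * v' - 1)" using exists_inverse assms by blast
  define y0 where "y0 = (u * v') mod int p"
  have y0_range: "y0 \<in> {0..<int p}" using p_gt_1 by (simp add: y0_def)
  have "int p dvd (y0 - u * v')" unfolding y0_def by (rule dvd_mod_diff)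
  then have "int p dvd (y0 * v - u)" using v' by algebra
  then have y0: "(y0 * v) mod int p = u mod int p" by (simp add: mod_eq_dvd_iff)
  have "\<exists>!y. y \<in> {0..<int p} \<and> (y * v) mod int p = u mod int p"
  proof (rule ex1I[of _ y0])
    fix y assume y: "y \<in> {0..<int p} \<and> y * v mod int p = u mod int p"
    then have "int p dvd ((y - y0) * v)"
      using y0 by (simp add: mod_eq_dvd_iff[symmetric] algebra_simps)
    then show "y = y0" using y y0_range assms dvd_mult_iff eq_if_dvd_diff by auto
  qed (use y0_range y0 in simp)
  then have "(THE y. y \<in> {0..<int p} \<and> (y * v) mod int p = u mod int p) \<in> {0..<int p} \<and>
      ((THE y. y \<in> {0..<int p} \<and> (y * v) mod int p = u mod int p) * v) mod int p = u mod int p"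
    by (rule theI')
  then show ?thesis by (auto simp: fdiv_def mod_eq_dvd_iff)
qed

lemma fdiv_cong:
  assumes "u mod int p = u' mod int p" and "v mod int p = v' mod int p"
  shows "fdiv p u v = fdiv p u' v'"
proof -
  have "(y * v) mod int p = (y * v') mod int p" for y
    using mod_mult_right_eq[of y v "int p"] mod_mult_right_eq[of y v' "int p"] assms(2) by simp
  then show ?thesis by (simp add: fdiv_def assms(1))
qed

text \<open>Homogeneous coordinates of the point of the projective line encoded by \<open>x \<le> p\<close>:
  \<open>(x : 1)\<close> for \<open>x < p\<close> and \<open>(1 : 0)\<close> for the point at infinity \<open>x = p\<close>.\<close>
definition point_num :: "nat \<Rightarrow> int" where
  "point_num y = (if y = p then 1 else int y)"

definition point_den :: "nat \<Rightarrow> int" where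
  "point_den y = (if y = p then 0 else 1)"

lemma point_coords_not_dvd: "\<not> (int p dvd point_num x \<and> int p dvd point_den x)"
  using not_dvd_one by (simp add: point_num_def point_den_def)

lemma mobius_mat:
  assumes "x \<le> p"
  shows "mobius p (mat a b c d) x =
    (if int p dvd (c * point_num x + d * point_den x) then p
     else fdiv p (a * point_num x + b * point_den x) (c * point_num x + d * point_den x))"
proof (cases "x = p")
  case True
  have "mobius p (mat a b c d) x =
      (if c mod int p = 0 then p else fdiv p (a mod int p) (c mod int p))"
    using True by (simp add: mobius_def mat_def)
  also have "\<dots> = (if int p dvd c then p else fdiv p a c)"
    using fdiv_cong[of "a mod int p" a "c mod int p" c] by (simp add: dvd_eq_mod_eq_0)
  finally show ?thesis
    using True by (simp add: point_num_def point_den_def)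
next
  case False
  let ?u = "a mod int p * int x + b mod int p" and ?v = "c mod int p * int x + d mod int p"
  have "mobius p (mat a b c d) x = (if ?v mod int p = 0 then p else fdiv p ?u ?v)"
    using False by (simp add: mobius_def mat_def)
  moreover have v: "?v mod int p = (c * int x + d) mod int p"
    by (rule mod_add_cong) (simp_all add: mod_mult_left_eq)
  moreover have "?u mod int p = (a * int x + b) mod int p"
    by (rule mod_add_cong) (simp_all add: mod_mult_left_eq)
  then have "fdiv p ?u ?v = fdiv p (a * int x + b) (c * int x + d)"
    using v by (rule fdiv_cong)
  ultimately have "mobius p (mat a b c d) x =
      (if int p dvd (c * int x + d) then p else fdiv p (a * int x + b) (c * int x + d))"
    by (simp only: dvd_eq_mod_eq_0)
  then show ?thesis
    using False by (simp add: point_num_def point_den_def)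
qed

lemma mobius_mat_spec:
  assumes det: "int p dvd (a*d - c*b - 1)" and x: "x \<le> p"
  defines "y \<equiv> mobius p (mat a b c d) x"
  shows "y \<le> p \<and> (\<exists>l. \<not> int p dvd l \<and>
     int p dvd (a * point_num x + b * point_den x - l * point_num y) \<and>
     int p dvd (c * point_num x + d * point_den x - l * point_den y))"
proof -
  define u where "u = a * point_num x + b * point_den x"
  define v where "v = c * point_num x + d * point_den x"
  show ?thesis
  proof (cases "int p dvd v")
    case True
    have "\<not> int p dvd u"
    proof
      assume "int p dvd u"
      then have "int p dvd point_num x" "int p dvd point_den x"
        using True det unfolding u_def v_def by algebra+
      then show False using point_coords_not_dvd by blast
    qed
    moreover have "y = p" using True x by (simp add: y_def mobius_mat v_def)
    ultimately show ?thesis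
      using True by (intro conjI exI[of _ u]) (simp_all add: u_def v_def point_num_def point_den_def)
  next
    case False
    have y: "y = fdiv p u v" using False x by (simp add: y_def mobius_mat u_def v_def)
    then have "y < p" "int p dvd (int y * v - u)" using fdiv_spec[OF False] by simp_all
    then have "int p dvd (u - v * point_num y)" "int p dvd (v - v * point_den y)"
      by (simp_all add: point_num_def point_den_def dvd_diff_commute mult.commute)
    then show ?thesis
      using False \<open>y < p\<close> unfolding u_def v_def by auto
  qed
qed

lemma eq_if_proportional:
  assumes "y \<le> p" "y' \<le> p" "\<not> int p dvd l" "\<not> int p dvd l'"
    and "int p dvd (l * point_num y - l' * point_num y')"
    and "int p dvd (l * point_den y - l' * point_den y')"
  shows "y = y'"
proof (cases "y = p \<or> y' = p")
  case True
  then show ?thesis using assms(3-6) by (auto simp: point_num_def point_den_def split: if_splits)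
next
  case False
  then have "int p dvd (l * int y - l' * int y')" "int p dvd (l - l')"
    using assms(5,6) by (simp_all add: point_num_def point_den_def)
  then have "int p dvd l * (int y - int y')" by algebra
  then have "int p dvd (int y - int y')" using assms(3) dvd_mult_iff by blast
  then show ?thesis using eq_if_dvd_diff[of "int y" "int y'"] False assms(1,2) by simp
qed

lemma mobius_mat_eqI:
  assumes det: "int p dvd (a*d - c*b - 1)" and x: "x \<le> p" and y: "y \<le> p"
    and l: "\<not> int p dvd l"
    and "int p dvd (a * point_num x + b * point_den x - l * point_num y)"
    and "int p dvd (c * point_num x + d * point_den x - l * point_den y)"
  shows "mobius p (mat a b c d) x = y"
proof -
  obtain l' where l': "mobius p (mat a b c d) x \<le> p" "\<not> int p dvd l'"
     "int p dvd (a * point_num x + b * point_den x - l' * point_num (mobius p (mat a b c d) x))"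
     "int p dvd (c * point_num x + d * point_den x - l' * point_den (mobius p (mat a b c d) x))"
    using mobius_mat_spec[OF det x] by blast
  show ?thesis
    by (rule eq_if_proportional[OF l'(1) y l'(2) l]) (use assms(5,6) l'(3,4) in algebra)+
qed

lemma mobius_mat_mult:
  assumes det1: "int p dvd (a*d - c*b - 1)" and det2: "int p dvd (e*h - g*f - 1)" and x: "x \<le> p"
  shows "mobius p (mat_mult p (mat a b c d) (mat e f g h)) x =
    mobius p (mat a b c d) (mobius p (mat e f g h) x)"
proof -
  define y where "y = mobius p (mat e f g h) x"
  define z where "z = mobius p (mat a b c d) y"
  obtain l1 where l1: "y \<le> p" "\<not> int p dvd l1"
    "int p dvd (e * point_num x + f * point_den x - l1 * point_num y)"
    "int p dvd (g * point_num x + h * point_den x - l1 * point_den y)"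
    using mobius_mat_spec[OF det2 x] unfolding y_def by blast
  obtain l2 where l2: "z \<le> p" "\<not> int p dvd l2"
    "int p dvd (a * point_num y + b * point_den y - l2 * point_num z)"
    "int p dvd (c * point_num y + d * point_den y - l2 * point_den z)"
    using mobius_mat_spec[OF det1 l1(1)] unfolding z_def by blast
  have det: "int p dvd ((a*e + b*g) * (c*f + d*h) - (c*e + d*g) * (a*f + b*h) - 1)"
    using det1 det2 by algebra
  have "\<not> int p dvd (l1 * l2)" using l1(2) l2(2) dvd_mult_iff by blast
  then have "mobius p (mat (a*e + b*g) (a*f + b*h) (c*e + d*g) (c*f + d*h)) x = z"
    by (rule mobius_mat_eqI[OF det x l2(1)]) (use l1(3,4) l2(3,4) in algebra)+
  then show ?thesis unfolding mat_mult_mat z_def y_def .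
qed

lemma mobius_scalar_mult:
  assumes det: "int p dvd (a*d - c*b - 1)" and x: "x \<le> p" and s: "s = 1 \<or> s = -1"
  shows "mobius p (mat_mult p (scalar s) (mat a b c d)) x = mobius p (mat a b c d) x"
proof -
  obtain l where l: "mobius p (mat a b c d) x \<le> p" "\<not> int p dvd l"
     "int p dvd (a * point_num x + b * point_den x - l * point_num (mobius p (mat a b c d) x))"
     "int p dvd (c * point_num x + d * point_den x - l * point_den (mobius p (mat a b c d) x))"
    using mobius_mat_spec[OF det x] by blast
  have ss: "s * s = 1" using s by auto
  have det': "int p dvd ((s*a + 0*c) * (0*b + s*d) - (0*a + s*c) * (s*b + 0*d) - 1)"
    using det ss by algebra
  have "\<not> int p dvd (s * l)" using l(2) s by auto
  then have "mobius p (mat (s*a + 0*c) (s*b + 0*d) (0*a + s*c) (0*b + s*d)) x =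
      mobius p (mat a b c d) x"
    by (rule mobius_mat_eqI[OF det' x l(1)]) (use l(3,4) in algebra)+
  then show ?thesis by (simp add: scalar_def mat_mult_mat)
qed

lemma mobius_SL2_range: "X \<in> carrier (SL2 p) \<Longrightarrow> x \<le> p \<Longrightarrow> mobius p X x \<le> p"
  by (metis SL2_cases mobius_mat_spec)

lemma mobius_SL2_mult:
  "X \<in> carrier (SL2 p) \<Longrightarrow> Y \<in> carrier (SL2 p) \<Longrightarrow> x \<le> p \<Longrightarrow>
     mobius p (X \<otimes>\<^bsub>SL2 p\<^esub> Y) x = mobius p X (mobius p Y x)"
  by (metis SL2_cases SL2_mult mobius_mat_mult)

lemma mobius_SL2_one: "x \<le> p \<Longrightarrow> mobius p \<one>\<^bsub>SL2 p\<^esub> x = x"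
  unfolding SL2_one by (rule mobius_mat_eqI[where l = 1]) (use p_gt_1 in \<open>simp_all add: not_dvd_one\<close>)

text \<open>\<open>psl_act\<close> applies an arbitrary (\<open>SOME\<close>) representative of the class; both \<open>\<plusminus>X\<close>
  induce the same map.\<close>
lemma psl_act_pclass:
  assumes X: "X \<in> carrier (SL2 p)" and x: "x \<le> p"
  shows "psl_act p (pclass X) x = mobius p X x"
proof -
  have "X \<in> pclass X" by (rule SL.rcos_self[OF X centre_pm_subgroup])
  then have "(SOME M. M \<in> pclass X) \<in> pclass X" by (rule someI)
  then obtain s where s: "s = 1 \<or> s = -1" "(SOME M. M \<in> pclass X) = scalar s \<otimes>\<^bsub>SL2 p\<^esub> X"
    by (rule pclass_cases)
  obtain a b c d where X_eq: "X = mat a b c d" "int p dvd (a*d - c*b - 1)"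
    using X SL2_cases by blast
  show ?thesis unfolding psl_act_def s(2) unfolding X_eq(1) SL2_mult
    by (rule mobius_scalar_mult[OF X_eq(2) x s(1)])
qed

lemma psl_act_range: "g \<in> carrier (PSL2 p) \<Longrightarrow> x \<le> p \<Longrightarrow> psl_act p g x \<le> p"
  by (metis PSL2_cases psl_act_pclass mobius_SL2_range)

lemma psl_act_mult:
  assumes g: "g \<in> carrier (PSL2 p)" and h: "h \<in> carrier (PSL2 p)" and x: "x \<le> p"
  shows "psl_act p (g \<otimes>\<^bsub>PSL2 p\<^esub> h) x = psl_act p g (psl_act p h x)"
proof -
  obtain X Y where X: "X \<in> carrier (SL2 p)" "g = pclass X" and Y: "Y \<in> carrier (SL2 p)" "h = pclass Y"
    using g h PSL2_cases by metis
  have "psl_act p (g \<otimes>\<^bsub>PSL2 p\<^esub> h) x = mobius p (X \<otimes>\<^bsub>SL2 p\<^esub> Y) x"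
    unfolding X(2) Y(2) PSL2_mult_pclass[OF X(1) Y(1)] using X(1) Y(1) x by (simp add: psl_act_pclass)
  also have "\<dots> = mobius p X (mobius p Y x)" by (rule mobius_SL2_mult[OF X(1) Y(1) x])
  finally show ?thesis
    using X Y x by (simp add: psl_act_pclass mobius_SL2_range)
qed

lemma psl_act_one: "x \<le> p \<Longrightarrow> psl_act p \<one>\<^bsub>PSL2 p\<^esub> x = x"
  by (simp add: PSL2_one psl_act_pclass mobius_SL2_one)

lemma psl_act_inv_left:
  assumes g: "g \<in> carrier (PSL2 p)" and x: "x \<le> p"
  shows "psl_act p (inv\<^bsub>PSL2 p\<^esub> g) (psl_act p g x) = x"
  using psl_act_mult[OF PSL.inv_closed[OF g] g x] psl_act_one[OF x] g by simp

lemma psl_act_inv_right: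
  assumes g: "g \<in> carrier (PSL2 p)" and x: "x \<le> p"
  shows "psl_act p g (psl_act p (inv\<^bsub>PSL2 p\<^esub> g) x) = x"
  using psl_act_mult[OF g PSL.inv_closed[OF g] x] psl_act_one[OF x] g by simp

lemma psl_act_bij: "g \<in> carrier (PSL2 p) \<Longrightarrow> bij_betw (psl_act p g) {..p} {..p}"
  by (rule bij_betwI[where g = "psl_act p (inv\<^bsub>PSL2 p\<^esub> g)"])
    (auto simp: psl_act_range PSL.inv_closed psl_act_inv_left psl_act_inv_right)

lemma perm_act_mult:
  assumes g: "g \<in> carrier (PSL2 p)" and h: "h \<in> carrier (PSL2 p)"
  shows "perm_act p (g \<otimes>\<^bsub>PSL2 p\<^esub> h) x = perm_act p g (perm_act p h x)"
proof
  fix i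
  show "perm_act p (g \<otimes>\<^bsub>PSL2 p\<^esub> h) x i = perm_act p g (perm_act p h x) i"
  proof (cases "i \<le> p")
    case True
    then show ?thesis
      using PSL.inv_mult_group[OF g h] psl_act_mult[OF PSL.inv_closed[OF h] PSL.inv_closed[OF g] True]
        psl_act_range[OF PSL.inv_closed[OF g] True]
      by (simp add: perm_act_def)
  qed (simp add: perm_act_def)
qed

lemma perm_act_one: "(\<forall>i>p. x i = 0) \<Longrightarrow> perm_act p \<one>\<^bsub>PSL2 p\<^esub> x = x"
  by (auto simp: perm_act_def psl_act_one)

lemma perm_act_zero: "perm_act p h (\<lambda>i. 0) = (\<lambda>i. 0)"
  by (simp add: perm_act_def)

lemma perm_act_sum:
  assumes "g \<in> carrier (PSL2 p)"
  shows "(\<Sum>i\<le>p. perm_act p g x i) = (\<Sum>i\<le>p. x i)"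
proof -
  have "(\<Sum>i\<le>p. perm_act p g x i) = (\<Sum>i\<le>p. x (psl_act p (inv\<^bsub>PSL2 p\<^esub> g) i))"
    by (simp add: perm_act_def)
  also have "\<dots> = (\<Sum>i\<le>p. x i)"
    using assms psl_act_bij PSL.inv_closed by (blast intro: sum.reindex_bij_betw)
  finally show ?thesis .
qed

lemma perm_act_closed: "g \<in> carrier (PSL2 p) \<Longrightarrow> x \<in> A_p p \<Longrightarrow> perm_act p g x \<in> A_p p"
  unfolding A_p_def using perm_act_sum by (auto simp: perm_act_def)

definition transl :: "int \<Rightarrow> mat2 set" where
  "transl t = pclass (mat 1 t 0 1)"

lemma transl_mat_in_SL2: "mat 1 t 0 1 \<in> carrier (SL2 p)"
  by (simp add: mat_in_SL2_iff)

lemma transl_in_PSL2: "transl t \<in> carrier (PSL2 p)"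
  unfolding transl_def PSL2_carrier using transl_mat_in_SL2 by blast

lemma psl_act_transl:
  assumes x: "x \<le> p"
  shows "psl_act p (transl t) x = (if x = p then p else nat ((int x + t) mod int p))"
proof -
  have det: "int p dvd (1*1 - 0*t - 1)" by simp
  have "mobius p (mat 1 t 0 1) x = (if x = p then p else nat ((int x + t) mod int p))"
  proof (cases "x = p")
    case True
    have "mobius p (mat 1 t 0 1) x = p"
      by (rule mobius_mat_eqI[OF det x order.refl not_dvd_one])
        (use True in \<open>simp_all add: point_num_def point_den_def\<close>)
    with True show ?thesis by simp
  next
    case False
    define y where "y = nat ((int x + t) mod int p)"
    have y: "int y = (int x + t) mod int p" "y < p"
      using p_gt_1 by (simp_all add: y_def nat_less_iff)
    have "mobius p (mat 1 t 0 1) x = y"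
    proof (rule mobius_mat_eqI[OF det x _ not_dvd_one])
      show "int p dvd (1 * point_num x + t * point_den x - 1 * point_num y)"
        using False y dvd_mod_diff[of "int x + t"]
        by (simp add: point_num_def point_den_def dvd_diff_commute)
    qed (use False y in \<open>simp_all add: point_den_def\<close>)
    then show ?thesis using False by (simp add: y_def)
  qed
  then show ?thesis
    unfolding transl_def psl_act_pclass[OF transl_mat_in_SL2 x] .
qed

lemma transl_inv: "inv\<^bsub>PSL2 p\<^esub> (transl t) = transl (- t)"
  unfolding transl_def PSL2_inv_pclass[OF transl_mat_in_SL2]
  using SL2_inv_mat[where a = 1 and b = t and c = 0 and d = 1] by simp

lemma psl_act_transitive:
  assumes j: "j \<le> p"
  shows "\<exists>g \<in> carrier (PSL2 p). psl_act p g p = j"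
proof (cases "j = p")
  case True
  then show ?thesis using psl_act_one[of p] by auto
next
  case False
  have det: "int p dvd (int j * 0 - 1 * (-1) - 1)" by simp
  then have M: "mat (int j) (-1) 1 0 \<in> carrier (SL2 p)" by (simp only: mat_in_SL2_iff)
  have "mobius p (mat (int j) (-1) 1 0) p = j"
    by (rule mobius_mat_eqI[OF det _ j not_dvd_one])
      (use False in \<open>simp_all add: point_num_def point_den_def\<close>)
  then show ?thesis
    using psl_act_pclass[OF M, of p] M PSL2_carrier by auto
qed

text \<open>A matrix fixing \<open>\<infinity>\<close>, \<open>0\<close> and \<open>1\<close> is scalar.\<close>
lemma psl_act_faithful:
  assumes h: "h \<in> carrier (PSL2 p)" and fixes_points: "\<forall>x\<le>p. psl_act p h x = x"
  shows "h = \<one>\<^bsub>PSL2 p\<^esub>"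
proof -
  obtain X where X: "X \<in> carrier (SL2 p)" "h = pclass X" using h PSL2_cases by blast
  obtain a b c d where X_eq: "X = mat a b c d" and det: "int p dvd (a*d - c*b - 1)"
    using X(1) SL2_cases by blast
  have fixed: "mobius p (mat a b c d) x = x" if "x \<le> p" for x
    using fixes_points that psl_act_pclass[OF X(1) that] X(2) X_eq by simp
  have points: "0 \<le> p" "1 \<le> p" "0 \<noteq> p" "1 \<noteq> p" using p_gt_1 by auto
  obtain l1 where "int p dvd (c * point_num p + d * point_den p - l1 * point_den p)"
    using mobius_mat_spec[OF det order.refl] fixed[OF order.refl] by auto
  then have c: "int p dvd c" by (simp add: point_num_def point_den_def)
  obtain l2 where "int p dvd (a * point_num 0 + b * point_den 0 - l2 * point_num 0)"
    using mobius_mat_spec[OF det points(1)] fixed[OF points(1)] by auto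
  then have b: "int p dvd b" using points by (simp add: point_num_def point_den_def)
  obtain l3 where "int p dvd (a * point_num 1 + b * point_den 1 - l3 * point_num 1)"
      "int p dvd (c * point_num 1 + d * point_den 1 - l3 * point_den 1)"
    using mobius_mat_spec[OF det points(2)] fixed[OF points(2)] by auto
  then have "int p dvd (a + b - l3)" "int p dvd (c + d - l3)"
    using points by (simp_all add: point_num_def point_den_def)
  then have "int p dvd (a - d)" using b c by algebra
  then have "X \<in> centre_pm p" using mat_in_centre_pm[OF det b c] X_eq by simp
  then show ?thesis using pclass_eq_one_iff[OF X(1)] X(2) by simp
qed

section \<open>The semidirect product \<open>G\<^sub>p\<close>\<close>

lemma G_p_assoc:
  assumes "x \<in> A_p p" "h \<in> carrier (PSL2 p)" "y \<in> A_p p" "k \<in> carrier (PSL2 p)"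
    "z \<in> A_p p" "l \<in> carrier (PSL2 p)"
  shows "(x, h) \<otimes>\<^bsub>G_p p\<^esub> (y, k) \<otimes>\<^bsub>G_p p\<^esub> (z, l) = (x, h) \<otimes>\<^bsub>G_p p\<^esub> ((y, k) \<otimes>\<^bsub>G_p p\<^esub> (z, l))"
proof -
  have "((x i + perm_act p h y i) mod 3 + perm_act p (h \<otimes>\<^bsub>PSL2 p\<^esub> k) z i) mod 3
      = (x i + perm_act p h (\<lambda>j. (y j + perm_act p k z j) mod 3) i) mod 3" for i
    unfolding perm_act_mult[OF assms(2,4)] by (simp add: perm_act_def mod_simps add.assoc)
  then show ?thesis
    using assms by (simp add: G_p_mult PSL.m_assoc)
qed

lemma G_p_group: "group (G_p p)"
proof (rule groupI)
  fix u v assume "u \<in> carrier (G_p p)" "v \<in> carrier (G_p p)"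
  then show "u \<otimes>\<^bsub>G_p p\<^esub> v \<in> carrier (G_p p)"
    by (auto simp: G_p_carrier G_p_mult A_p_add perm_act_closed)
next
  show "\<one>\<^bsub>G_p p\<^esub> \<in> carrier (G_p p)" by (simp add: G_p_one G_p_carrier A_p_zero)
next
  fix u v w assume "u \<in> carrier (G_p p)" "v \<in> carrier (G_p p)" "w \<in> carrier (G_p p)"
  then show "u \<otimes>\<^bsub>G_p p\<^esub> v \<otimes>\<^bsub>G_p p\<^esub> w = u \<otimes>\<^bsub>G_p p\<^esub> (v \<otimes>\<^bsub>G_p p\<^esub> w)"
    by (auto simp: G_p_carrier G_p_assoc)
next
  fix u assume "u \<in> carrier (G_p p)"
  then obtain x h where u: "u = (x, h)" "x \<in> A_p p" "h \<in> carrier (PSL2 p)"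
    by (auto simp: G_p_carrier)
  then show "\<one>\<^bsub>G_p p\<^esub> \<otimes>\<^bsub>G_p p\<^esub> u = u"
    by (simp add: G_p_one G_p_mult perm_act_one A_p_outside A_p_mod)
  let ?y = "\<lambda>i. (- perm_act p (inv\<^bsub>PSL2 p\<^esub> h) x i) mod 3"
  have "(?y, inv\<^bsub>PSL2 p\<^esub> h) \<otimes>\<^bsub>G_p p\<^esub> u = \<one>\<^bsub>G_p p\<^esub>"
    using u by (simp add: G_p_mult G_p_one mod_simps)
  moreover have "(?y, inv\<^bsub>PSL2 p\<^esub> h) \<in> carrier (G_p p)"
    using u by (simp add: G_p_carrier A_p_neg perm_act_closed)
  ultimately show "\<exists>v\<in>carrier (G_p p). v \<otimes>\<^bsub>G_p p\<^esub> u = \<one>\<^bsub>G_p p\<^esub>" by blast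
qed

sublocale G: group "G_p p"
  by (rule G_p_group)

lemma G_p_mult_A:
  "a \<in> A_p p \<Longrightarrow> b \<in> A_p p \<Longrightarrow>
     (a, \<one>\<^bsub>PSL2 p\<^esub>) \<otimes>\<^bsub>G_p p\<^esub> (b, \<one>\<^bsub>PSL2 p\<^esub>) = ((\<lambda>i. (a i + b i) mod 3), \<one>\<^bsub>PSL2 p\<^esub>)"
  by (simp add: G_p_mult perm_act_one A_p_outside)

lemma G_p_mult_H:
  "h \<in> carrier (PSL2 p) \<Longrightarrow> k \<in> carrier (PSL2 p) \<Longrightarrow>
     ((\<lambda>i. 0), h) \<otimes>\<^bsub>G_p p\<^esub> ((\<lambda>i. 0), k) = ((\<lambda>i. 0), h \<otimes>\<^bsub>PSL2 p\<^esub> k)"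
  by (simp add: G_p_mult perm_act_zero)

lemma G_p_mult_A_H:
  "a \<in> A_p p \<Longrightarrow> h \<in> carrier (PSL2 p) \<Longrightarrow>
     (a, \<one>\<^bsub>PSL2 p\<^esub>) \<otimes>\<^bsub>G_p p\<^esub> ((\<lambda>i. 0), h) = (a, h)"
  by (simp add: G_p_mult perm_act_zero A_p_mod)

lemma G_p_inv_H:
  assumes "h \<in> carrier (PSL2 p)"
  shows "inv\<^bsub>G_p p\<^esub> ((\<lambda>i. 0), h) = ((\<lambda>i. 0), inv\<^bsub>PSL2 p\<^esub> h)"
  using assms by (intro G.inv_equality) (simp_all add: G_p_mult_H G_p_one G_p_carrier A_p_zero)

lemma G_p_inv_A:
  assumes "a \<in> A_p p"
  shows "inv\<^bsub>G_p p\<^esub> (a, \<one>\<^bsub>PSL2 p\<^esub>) = ((\<lambda>i. (- a i) mod 3), \<one>\<^bsub>PSL2 p\<^esub>)"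
  using assms A_p_neg[OF assms]
  by (intro G.inv_equality) (simp_all add: G_p_mult_A G_p_one G_p_carrier mod_simps)

lemma G_p_conj_A:
  assumes n: "n \<in> carrier (G_p p)" and a: "a \<in> A_p p"
  shows "n \<otimes>\<^bsub>G_p p\<^esub> (a, \<one>\<^bsub>PSL2 p\<^esub>) \<otimes>\<^bsub>G_p p\<^esub> inv\<^bsub>G_p p\<^esub> n =
    (perm_act p (snd n) a, \<one>\<^bsub>PSL2 p\<^esub>)"
proof -
  obtain x h where n_eq: "n = (x, h)" and x: "x \<in> A_p p" and h: "h \<in> carrier (PSL2 p)"
    using n by (auto simp: G_p_carrier)
  have ha: "(perm_act p h a, \<one>\<^bsub>PSL2 p\<^esub>) \<in> carrier (G_p p)"
    using h a by (simp add: G_p_carrier perm_act_closed)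
  have "n \<otimes>\<^bsub>G_p p\<^esub> (a, \<one>\<^bsub>PSL2 p\<^esub>) = (perm_act p h a, \<one>\<^bsub>PSL2 p\<^esub>) \<otimes>\<^bsub>G_p p\<^esub> n"
    using h x by (simp add: n_eq G_p_mult perm_act_one A_p_outside add.commute)
  then show ?thesis
    using n ha by (simp add: G.m_assoc n_eq)
qed

lemma G_p_commutator_notin_A:
  "\<exists>g \<in> carrier (G_p p). \<exists>h \<in> carrier (G_p p).
     g \<otimes>\<^bsub>G_p p\<^esub> h \<otimes>\<^bsub>G_p p\<^esub> inv\<^bsub>G_p p\<^esub> g \<otimes>\<^bsub>G_p p\<^esub> inv\<^bsub>G_p p\<^esub> h \<notin> A_sub p"
proof -
  define T where "T = mat 1 1 0 1"
  define W where "W = mat 0 (-1) 1 0"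
  have T: "T \<in> carrier (SL2 p)" and W: "W \<in> carrier (SL2 p)"
    by (simp_all add: T_def W_def mat_in_SL2_iff)
  have "T \<otimes>\<^bsub>SL2 p\<^esub> W \<otimes>\<^bsub>SL2 p\<^esub> inv\<^bsub>SL2 p\<^esub> T \<otimes>\<^bsub>SL2 p\<^esub> inv\<^bsub>SL2 p\<^esub> W = mat 2 1 1 1"
    by (simp add: T_def W_def SL2_inv_mat SL2_mult mat_mult_mat)
  moreover have "mat 2 1 1 1 \<notin> centre_pm p"
    using not_dvd_one by (auto simp: centre_pm_eq scalar_def mat_eq_iff)
  ultimately have "pclass T \<otimes>\<^bsub>PSL2 p\<^esub> pclass W \<otimes>\<^bsub>PSL2 p\<^esub> inv\<^bsub>PSL2 p\<^esub> (pclass T)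
      \<otimes>\<^bsub>PSL2 p\<^esub> inv\<^bsub>PSL2 p\<^esub> (pclass W) \<noteq> \<one>\<^bsub>PSL2 p\<^esub>"
    using T W pclass_eq_one_iff[of "T \<otimes>\<^bsub>SL2 p\<^esub> W \<otimes>\<^bsub>SL2 p\<^esub> inv\<^bsub>SL2 p\<^esub> T \<otimes>\<^bsub>SL2 p\<^esub> inv\<^bsub>SL2 p\<^esub> W"]
    by (simp add: PSL2_inv_pclass PSL2_mult_pclass mat_in_SL2_iff)
  moreover have "pclass T \<in> carrier (PSL2 p)" "pclass W \<in> carrier (PSL2 p)"
    using T W PSL2_carrier by auto
  ultimately show ?thesis
    by (intro bexI[of _ "((\<lambda>i. 0), pclass T)"] bexI[of _ "((\<lambda>i. 0), pclass W)"])
      (simp_all add: G_p_inv_H G_p_mult_H A_sub_def G_p_carrier A_p_zero)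
qed

lemma A_noncentral:
  "\<exists>g \<in> carrier (G_p p). \<exists>a \<in> A_sub p. g \<otimes>\<^bsub>G_p p\<^esub> a \<otimes>\<^bsub>G_p p\<^esub> inv\<^bsub>G_p p\<^esub> g \<noteq> a"
proof -
  define v where "v = (\<lambda>k::nat. if k = 0 then 1 else if k = 1 then 2 else (0::int))"
  have "(\<Sum>k\<le>p. v k) = (\<Sum>k\<in>{0,1}. v k)"
    by (rule sum.mono_neutral_right) (use p_gt_1 in \<open>auto simp: v_def\<close>)
  then have v: "v \<in> A_p p"
    using p_gt_1 by (intro A_pI) (auto simp: v_def)
  define g where "g = ((\<lambda>i::nat. 0::int), transl 1)"
  have g: "g \<in> carrier (G_p p)" using transl_in_PSL2 A_p_zero by (simp add: g_def G_p_carrier)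
  have "perm_act p (transl 1) v 1 = v 0"
    using p_gt_1 by (simp add: perm_act_def transl_inv psl_act_transl)
  then have "perm_act p (transl 1) v \<noteq> v" by (auto simp: v_def)
  then have "g \<otimes>\<^bsub>G_p p\<^esub> (v, \<one>\<^bsub>PSL2 p\<^esub>) \<otimes>\<^bsub>G_p p\<^esub> inv\<^bsub>G_p p\<^esub> g \<noteq> (v, \<one>\<^bsub>PSL2 p\<^esub>)"
    using G_p_conj_A[OF g v] by (simp add: g_def)
  then show ?thesis using g v by (auto simp: A_sub_def)
qed

section \<open>Normal subgroups of \<open>SL\<^sub>2(F\<^sub>p)\<close>\<close>

lemma subgroup_SL2_mult:
  "subgroup Q (SL2 p) \<Longrightarrow> X \<in> Q \<Longrightarrow> Y \<in> Q \<Longrightarrow> mat_mult p X Y \<in> Q"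
  using subgroup.m_closed SL2_mult by metis

lemma subgroup_SL2_inv_mat:
  "subgroup Q (SL2 p) \<Longrightarrow> mat a b c d \<in> Q \<Longrightarrow> int p dvd (a*d - c*b - 1) \<Longrightarrow>
     mat d (-b) (-c) a \<in> Q"
  using subgroup.m_inv_closed SL2_inv_mat by metis

lemma normal_SL2_conj_mat:
  assumes "Q \<lhd> SL2 p" and "X \<in> Q" and "int p dvd (e*h - g*f - 1)"
  shows "mat_mult p (mat_mult p (mat e f g h) X) (mat h (-f) (-g) e) \<in> Q"
  using assms SL.normal_inv_iff SL2_inv_mat mat_in_SL2_iff SL2_mult by metis

lemma SL2_generated_by_transvections:
  assumes Q: "subgroup Q (SL2 p)"
    and upper: "\<And>t. mat 1 t 0 1 \<in> Q" and lower: "\<And>t. mat 1 0 t 1 \<in> Q"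
  shows "carrier (SL2 p) \<subseteq> Q"
proof
  have lower_left_unit: "mat a b c d \<in> Q"
    if det: "int p dvd (a*d - c*b - 1)" and c: "\<not> int p dvd c" for a b c d
  proof -
    obtain c' where c': "int p dvd (c * c' - 1)" using exists_inverse c by blast
    have "mat_mult p (mat_mult p (mat 1 ((a - 1) * c') 0 1) (mat 1 0 c 1)) (mat 1 ((d - 1) * c') 0 1)
        = mat a b c d"
      unfolding mat_mult_mat mat_eq_iff using c' det
      by (intro conjI; ((simp add: algebra_simps; fail) | algebra))
    then show ?thesis using subgroup_SL2_mult[OF Q] upper lower by metis
  qed
  fix X assume "X \<in> carrier (SL2 p)"
  then obtain a b c d where X: "X = mat a b c d" and det: "int p dvd (a*d - c*b - 1)"
    using SL2_cases by blast
  show "X \<in> Q"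
  proof (cases "int p dvd c")
    case False
    then show ?thesis using lower_left_unit[OF det] X by simp
  next
    case True
    have "\<not> int p dvd (c + d)"
    proof
      assume "int p dvd (c + d)"
      then have "int p dvd 1" using det True by algebra
      then show False using not_dvd_one by simp
    qed
    moreover have "int p dvd ((a + b) * d - (c + d) * b - 1)" using det by algebra
    ultimately have "mat (a + b) b (c + d) d \<in> Q" using lower_left_unit by blast
    moreover have "mat_mult p (mat (a + b) b (c + d) d) (mat 1 0 (-1) 1) = mat a b c d"
      by (simp add: mat_mult_mat algebra_simps)
    ultimately show ?thesis using subgroup_SL2_mult[OF Q] lower X by metis
  qed
qed

lemma subgroup_SL2_upper_transvections:
  assumes Q: "subgroup Q (SL2 p)" and z: "\<not> int p dvd z" "mat 1 z 0 1 \<in> Q"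
  shows "mat 1 t 0 1 \<in> Q"
proof -
  have powers: "mat 1 (int (Suc n) * z) 0 1 \<in> Q" for n
  proof (induction n)
    case (Suc n)
    have "mat_mult p (mat 1 (int (Suc n) * z) 0 1) (mat 1 z 0 1) = mat 1 (int (Suc (Suc n)) * z) 0 1"
      by (simp add: mat_mult_mat algebra_simps)
    then show ?case using subgroup_SL2_mult[OF Q Suc z(2)] by simp
  qed (use z in simp)
  obtain z' where z': "int p dvd (z * z' - 1)" using exists_inverse z(1) by blast
  define n where "n = nat ((t * z') mod int p) + p - 1"
  have "int (Suc n) = (t * z') mod int p + int p" using p_gt_1 by (simp add: n_def)
  then have "mat 1 (int (Suc n) * z) 0 1 = mat 1 t 0 1"
    unfolding mat_eq_iff using z' dvd_mod_diff[of "t * z'"] by simp algebra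
  then show ?thesis using powers[of n] by simp
qed

lemma normal_SL2_lower_transvection:
  assumes "Q \<lhd> SL2 p" and "mat 1 (-t) 0 1 \<in> Q"
  shows "mat 1 0 t 1 \<in> Q"
proof -
  have "int p dvd (0*0 - 1*(-1) - 1)" by simp
  from normal_SL2_conj_mat[OF assms this]
  show ?thesis by (simp add: mat_mult_mat)
qed

lemma normal_SL2_transvection_of_triangular:
  assumes Q: "Q \<lhd> SL2 p" and Y: "mat a b c d \<in> Q" and c: "int p dvd c"
    and det: "int p dvd (a*d - c*b - 1)" and a: "\<not> int p dvd (a*a - 1)"
  shows "\<exists>z. \<not> int p dvd z \<and> mat 1 z 0 1 \<in> Q"
proof -
  have sub: "subgroup Q (SL2 p)" using Q normal_imp_subgroup by blast
  have "int p dvd (1*1 - 0*1 - 1)" by simp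
  from normal_SL2_conj_mat[OF Q Y this]
  have "mat_mult p (mat_mult p (mat_mult p (mat 1 1 0 1) (mat a b c d)) (mat 1 (-1) (-0) 1))
      (mat d (-b) (-c) a) \<in> Q"
    using subgroup_SL2_mult[OF sub] subgroup_SL2_inv_mat[OF sub Y det] by blast
  moreover have "mat_mult p (mat_mult p (mat_mult p (mat 1 1 0 1) (mat a b c d)) (mat 1 (-1) (-0) 1))
      (mat d (-b) (-c) a) = mat 1 (1 - a*a) 0 1"
    unfolding mat_mult_mat mat_eq_iff using c det
    by (intro conjI; ((simp add: algebra_simps; fail) | algebra))
  moreover have "\<not> int p dvd (1 - a*a)" using a by (simp add: dvd_diff_commute)
  ultimately show ?thesis by auto
qed

text \<open>With \<open>d = 0\<close>, conjugating the inverse by \<open>diag(2, 1/2)\<close> and multiplying gives a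
  triangular matrix with diagonal entry \<open>1/4\<close>, and \<open>(1/4)\<^sup>2 \<noteq> 1\<close> as \<open>p\<close> does not divide 15.\<close>
lemma normal_SL2_transvection_of_zero_corner:
  assumes p: "5 < p" and Q: "Q \<lhd> SL2 p" and M: "mat a b c d \<in> Q"
    and det: "int p dvd (a*d - c*b - 1)" and d: "int p dvd d"
  shows "\<exists>z. \<not> int p dvd z \<and> mat 1 z 0 1 \<in> Q"
proof -
  have sub: "subgroup Q (SL2 p)" using Q normal_imp_subgroup by blast
  have "\<not> int p dvd 2" using p by (intro not_dvd_small) simp_all
  then obtain h where h: "int p dvd (2*h - 1)" using exists_inverse by blast
  then have "int p dvd (2*h - 0*0 - 1)" by simp
  from normal_SL2_conj_mat[OF Q subgroup_SL2_inv_mat[OF sub M det] this]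
  have "mat_mult p (mat a b c d) (mat_mult p (mat_mult p (mat 2 0 0 h) (mat d (-b) (-c) a))
      (mat h (-0) (-0) 2)) \<in> Q"
    using subgroup_SL2_mult[OF sub M] by blast
  moreover have "mat_mult p (mat a b c d) (mat_mult p (mat_mult p (mat 2 0 0 h) (mat d (-b) (-c) a))
      (mat h (-0) (-0) 2)) = mat (2*a*d*h - b*c*h*h) (-4*a*b + 2*a*b*h)
        (d * (2*c*h - c*h*h)) (-4*c*b + 2*d*a*h)"
    by (simp add: mat_mult_mat algebra_simps)
  moreover have "int p dvd (d * (2*c*h - c*h*h))" using d by simp
  moreover have "int p dvd ((2*a*d*h - b*c*h*h) * (-4*c*b + 2*d*a*h)
      - d * (2*c*h - c*h*h) * (-4*a*b + 2*a*b*h) - 1)"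
    using det h by algebra
  moreover have "\<not> int p dvd ((2*a*d*h - b*c*h*h) * (2*a*d*h - b*c*h*h) - 1)"
  proof
    assume "int p dvd ((2*a*d*h - b*c*h*h) * (2*a*d*h - b*c*h*h) - 1)"
    then have "int p dvd (3 * 5)" using det h d by algebra
    moreover have "\<not> int p dvd 3" "\<not> int p dvd 5" using p by (simp_all add: not_dvd_small)
    ultimately show False using dvd_mult_iff by blast
  qed
  ultimately show ?thesis using normal_SL2_transvection_of_triangular[OF Q] by metis
qed

lemma normal_SL2_transvection_of_unit_corner:
  assumes p: "5 < p" and Q: "Q \<lhd> SL2 p" and M: "mat a b c d \<in> Q"
    and det: "int p dvd (a*d - c*b - 1)" and c: "\<not> int p dvd c"
  shows "\<exists>z. \<not> int p dvd z \<and> mat 1 z 0 1 \<in> Q"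
proof -
  obtain c' where c': "int p dvd (c * c' - 1)" using exists_inverse c by blast
  have "int p dvd (1*1 - 0*(d*c') - 1)" by simp
  from normal_SL2_conj_mat[OF Q M this]
  have "mat (a + d*c'*c) (-(d*c') * (a + d*c'*c) + b + d*c'*d) c (d - c*d*c') \<in> Q"
    by (simp add: mat_mult_mat algebra_simps)
  moreover have "int p dvd ((a + d*c'*c) * (d - c*d*c') - c * (-(d*c') * (a + d*c'*c) + b + d*c'*d) - 1)"
    using det by algebra
  moreover have "int p dvd (d - c*d*c')" using c' by algebra
  ultimately show ?thesis by (rule normal_SL2_transvection_of_zero_corner[OF p Q])
qed

lemma normal_SL2_transvection:
  assumes p: "5 < p" and Q: "Q \<lhd> SL2 p" and X: "X \<in> Q" "X \<notin> centre_pm p"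
  shows "\<exists>z. \<not> int p dvd z \<and> mat 1 z 0 1 \<in> Q"
proof -
  obtain a b c d where X_eq: "X = mat a b c d" and det: "int p dvd (a*d - c*b - 1)"
    using X(1) Q normal_imp_subgroup subgroup.subset SL2_cases by blast
  have M: "mat a b c d \<in> Q" using X X_eq by simp
  consider "\<not> int p dvd c" | "int p dvd c" "\<not> int p dvd b" | "int p dvd c" "int p dvd b"
    by blast
  then show ?thesis
  proof cases
    case 1
    then show ?thesis using normal_SL2_transvection_of_unit_corner[OF p Q M det] by blast
  next
    case 2
    have "int p dvd (0*0 - 1*(-1) - 1)" by simp
    from normal_SL2_conj_mat[OF Q M this]
    have "mat d (-c) (-b) a \<in> Q" by (simp add: mat_mult_mat)
    moreover have "int p dvd (d*a - (-b)*(-c) - 1)" using det by algebra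
    ultimately show ?thesis
      using normal_SL2_transvection_of_unit_corner[OF p Q] 2 by simp
  next
    case 3
    have "\<not> int p dvd (a*a - 1)"
    proof
      assume "int p dvd (a*a - 1)"
      then have "int p dvd (a - d)" using det 3 by algebra
      then show False using mat_in_centre_pm[OF det 3(2,1)] X X_eq by simp
    qed
    then show ?thesis using normal_SL2_transvection_of_triangular[OF Q M 3(1) det] by blast
  qed
qed

theorem normal_SL2_eq_carrier:
  assumes "5 < p" and Q: "Q \<lhd> SL2 p" and "X \<in> Q" "X \<notin> centre_pm p"
  shows "Q = carrier (SL2 p)"
proof -
  have sub: "subgroup Q (SL2 p)" using Q normal_imp_subgroup by blast
  obtain z where "\<not> int p dvd z" "mat 1 z 0 1 \<in> Q"
    using normal_SL2_transvection assms by blast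
  then have upper: "mat 1 t 0 1 \<in> Q" for t using subgroup_SL2_upper_transvections[OF sub] by blast
  then have "mat 1 0 t 1 \<in> Q" for t using normal_SL2_lower_transvection[OF Q] by blast
  then have "carrier (SL2 p) \<subseteq> Q" using SL2_generated_by_transvections[OF sub upper] by blast
  then show ?thesis using sub subgroup.subset by blast
qed

section \<open>Irreducibility of \<open>A\<^sub>p\<close>\<close>

definition A_p_submodule :: "(nat \<Rightarrow> int) set \<Rightarrow> bool" where
  "A_p_submodule S \<longleftrightarrow> S \<subseteq> A_p p \<and> add_closed_mod3 S \<and>
     (\<forall>h \<in> carrier (PSL2 p). \<forall>a \<in> S. perm_act p h a \<in> S)"

lemma bij_betw_shift:
  assumes "i < p"
  shows "bij_betw (\<lambda>t. nat ((int i - int t) mod int p)) {..<p} {..<p}"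
proof (rule bij_betwI[where g = "\<lambda>t. nat ((int i - int t) mod int p)"])
  show "(\<lambda>t. nat ((int i - int t) mod int p)) \<in> {..<p} \<rightarrow> {..<p}"
    using p_gt_1 by (auto simp: nat_less_iff)
  have "nat ((int i - int (nat ((int i - int t) mod int p))) mod int p) = t" if "t < p" for t
    using p_gt_1 that by (simp add: mod_diff_right_eq)
  then show "\<And>t. t \<in> {..<p} \<Longrightarrow> nat ((int i - int (nat ((int i - int t) mod int p))) mod int p) = t"
    by simp
qed (use p_gt_1 in \<open>auto simp: nat_less_iff mod_diff_right_eq\<close>)

lemma sum_translates:
  assumes b: "b \<in> A_p p"
  shows "(\<lambda>i. (\<Sum>t<p. perm_act p (transl (int t)) b i) mod 3) =
    (\<lambda>i. if i < p then (\<Sum>k<p. b k) mod 3 else if i = p then (int p * b p) mod 3 else 0)"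
proof
  fix i
  have translate: "perm_act p (transl (int t)) b i = b (nat ((int i - int t) mod int p))"
    if "i < p" for t
    using that by (simp add: perm_act_def transl_inv psl_act_transl)
  show "(\<Sum>t<p. perm_act p (transl (int t)) b i) mod 3 =
      (if i < p then (\<Sum>k<p. b k) mod 3 else if i = p then (int p * b p) mod 3 else 0)"
  proof (cases "i < p")
    case True
    then have "(\<Sum>t<p. perm_act p (transl (int t)) b i) = (\<Sum>k<p. b k)"
      using translate sum.reindex_bij_betw[OF bij_betw_shift[OF True]] by simp
    then show ?thesis using True by simp
  next
    case False
    then show ?thesis by (simp add: perm_act_def transl_inv psl_act_transl)
  qed
qed

lemma submodule_nonzero_at_infinity:
  assumes S: "A_p_submodule S" and a: "a \<in> S" "a \<noteq> (\<lambda>i. 0)"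
  shows "\<exists>b \<in> S. b p \<noteq> 0"
proof -
  obtain j where j: "a j \<noteq> 0" using a(2) by auto
  have "a \<in> A_p p" using S a(1) by (auto simp: A_p_submodule_def)
  then have "j \<le> p" using j A_p_outside by (meson not_le)
  then obtain g where g: "g \<in> carrier (PSL2 p)" "psl_act p g p = j"
    using psl_act_transitive by blast
  have "perm_act p (inv\<^bsub>PSL2 p\<^esub> g) a \<in> S"
    using S a(1) g(1) by (simp add: A_p_submodule_def)
  moreover have "perm_act p (inv\<^bsub>PSL2 p\<^esub> g) a p = a j"
    using g by (simp add: perm_act_def)
  ultimately show ?thesis using j by metis
qed

lemma submodule_contains_point_vectors:
  assumes S: "A_p_submodule S"
    and f: "(\<lambda>i. if i < p then 2 else if i = p then 1 else 0) \<in> S" and j: "j \<le> p"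
  shows "(\<lambda>i. if i = j then 1 else if i \<le> p then 2 else 0) \<in> S"
proof -
  obtain g where g: "g \<in> carrier (PSL2 p)" "psl_act p g p = j"
    using psl_act_transitive[OF j] by blast
  have "perm_act p g (\<lambda>i. if i < p then 2 else if i = p then 1 else 0) i =
      (if i = j then 1 else if i \<le> p then 2 else 0)" for i
  proof (cases "i \<le> p")
    case True
    have "psl_act p (inv\<^bsub>PSL2 p\<^esub> g) i = p \<longleftrightarrow> i = j"
      using g psl_act_inv_left[OF g(1), of p] psl_act_inv_right[OF g(1) True] by auto
    moreover have "psl_act p (inv\<^bsub>PSL2 p\<^esub> g) i \<le> p"
      using psl_act_range[OF PSL.inv_closed[OF g(1)] True] .
    ultimately show ?thesis using True j by (auto simp: perm_act_def)
  qed (use j in \<open>auto simp: perm_act_def\<close>)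
  then have "perm_act p g (\<lambda>i. if i < p then 2 else if i = p then 1 else 0) =
      (\<lambda>i. if i = j then 1 else if i \<le> p then 2 else 0)" ..
  moreover have "perm_act p g (\<lambda>i. if i < p then 2 else if i = p then 1 else 0) \<in> S"
    using S f g(1) by (simp add: A_p_submodule_def)
  ultimately show ?thesis by simp
qed

end

locale prime_1_mod_3 = prime_modulus +
  assumes p_mod_3: "p mod 3 = 1"
begin

lemma p_gt_5: "5 < p"
proof (rule ccontr)
  assume "\<not> 5 < p"
  then have "p = 4" using p_gt_1 p_mod_3 by presburger
  then show False using prime_odd_nat[OF prime] by simp
qed

text \<open>Summing the \<open>p\<close> translates of a vector multiplies its value at infinity by
  \<open>p \<equiv> 1 (mod 3)\<close> and spreads the sum of its other values, which is then minus that value.\<close>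
lemma submodule_contains_constant_vector:
  assumes S: "A_p_submodule S" and b: "b \<in> S" "b p \<noteq> 0"
  shows "(\<lambda>i. if i < p then 2 else if i = p then 1 else 0) \<in> S"
proof -
  have bA: "b \<in> A_p p" using S b(1) by (auto simp: A_p_submodule_def)
  define c where "c = (\<lambda>i. (\<Sum>t<p. perm_act p (transl (int t)) b i) mod 3)"
  have cS: "c \<in> S"
    unfolding c_def using S b(1) transl_in_PSL2
    by (intro add_closed_mod3_sum) (auto simp: A_p_submodule_def)
  define s where "s = (\<Sum>k<p. b k)"
  have "(s + b p) mod 3 = 0"
    using A_p_sum[OF bA] by (simp add: s_def lessThan_Suc_atMost[symmetric])
  moreover have "b p = 1 \<or> b p = 2" using A_p_range[OF bA, of p] b(2) by auto
  ultimately have s: "s mod 3 = (if b p = 1 then 2 else 1)" by presburger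
  have infinity: "(int p * b p) mod 3 = b p"
    using p_mod_3 A_p_mod[OF bA] by (metis mod_mult_left_eq mult_1 of_nat_mod of_nat_numeral of_nat_1)
  have "c = (\<lambda>i. if i < p then (if b p = 1 then 2 else 1) else if i = p then b p else 0)"
    unfolding c_def sum_translates[OF bA] s_def[symmetric] s infinity ..
  then consider "c = (\<lambda>i. if i < p then 2 else if i = p then 1 else 0)"
    | "c = (\<lambda>i. if i < p then 1 else if i = p then 2 else 0)"
    using \<open>b p = 1 \<or> b p = 2\<close> by fastforce
  then show ?thesis
  proof cases
    case 2
    then have "(\<lambda>i. (c i + c i) mod 3) = (\<lambda>i. if i < p then 2 else if i = p then 1 else 0)"
      by auto
    moreover have "(\<lambda>i. (c i + c i) mod 3) \<in> S"
      using cS S unfolding A_p_submodule_def add_closed_mod3_def by blast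
    ultimately show ?thesis by simp
  qed (use cS in simp)
qed

theorem submodule_eq_A_p:
  assumes S: "A_p_submodule S" and a: "a \<in> S" "a \<noteq> (\<lambda>i. 0)"
  shows "S = A_p p"
proof -
  have add: "add_closed_mod3 S" using S by (simp add: A_p_submodule_def)
  define e where "e j = (\<lambda>i. if i = j then 1 else if i \<le> p then 2 else (0::int))" for j
  obtain b where "b \<in> S" "b p \<noteq> 0" using submodule_nonzero_at_infinity[OF S a] by blast
  then have e: "e j \<in> S" if "j \<le> p" for j
    unfolding e_def
    using submodule_contains_point_vectors[OF S _ that] submodule_contains_constant_vector[OF S]
    by blast
  have "(\<lambda>i. if i = j then 1 else if i = p then 2 else 0) \<in> S" if "j < p" for j
  proof -
    have "(\<lambda>i. (e p i + (int 2 * e j i) mod 3) mod 3) \<in> S"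
      using add e[of p] add_closed_mod3_multiple[OF add e, where c = 2] that
      unfolding add_closed_mod3_def by simp
    moreover have "(\<lambda>i. (e p i + (int 2 * e j i) mod 3) mod 3) =
        (\<lambda>i. if i = j then 1 else if i = p then 2 else 0)"
      using that by (auto simp: e_def fun_eq_iff)
    ultimately show ?thesis by simp
  qed
  then have "A_p p \<subseteq> S" by (rule A_p_subset_if_contains_basis[OF add])
  then show ?thesis using S by (auto simp: A_p_submodule_def)
qed

end

section \<open>Normal subgroups of \<open>G\<^sub>p\<close>\<close>

lemma (in group_hom) normal_vimage:
  assumes "N \<lhd> H"
  shows "{x \<in> carrier G. h x \<in> N} \<lhd> G"
proof -
  interpret N: normal N H by (rule assms)
  have "subgroup {x \<in> carrier G. h x \<in> N} G"
    by (rule G.subgroupI) (auto simp: N.m_closed N.m_inv_closed)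
  moreover have "x \<otimes> y \<otimes> inv x \<in> {x \<in> carrier G. h x \<in> N}"
    if "x \<in> carrier G" "y \<in> {x \<in> carrier G. h x \<in> N}" for x y
    using that N.inv_op_closed2 by simp
  ultimately show ?thesis by (auto simp: G.normal_inv_iff)
qed

context prime_modulus
begin

lemma A_sub_normal: "A_sub p \<lhd> G_p p"
proof -
  have "subgroup (A_sub p) (G_p p)"
    by (rule G.subgroupI)
      (use A_p_zero in \<open>auto simp: A_sub_def G_p_carrier G_p_mult_A G_p_inv_A A_p_add A_p_neg\<close>)
  then show ?thesis
    by (auto simp: G.normal_inv_iff A_sub_def G_p_conj_A G_p_carrier perm_act_closed)
qed

lemma submodule_of_normal:
  assumes M: "M \<lhd> G_p p"
  shows "A_p_submodule {a \<in> A_p p. (a, \<one>\<^bsub>PSL2 p\<^esub>) \<in> M}"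
proof -
  interpret M: normal M "G_p p" by (rule M)
  have "(\<lambda>i. (a i + b i) mod 3) \<in> {a \<in> A_p p. (a, \<one>\<^bsub>PSL2 p\<^esub>) \<in> M}"
    if "a \<in> {a \<in> A_p p. (a, \<one>\<^bsub>PSL2 p\<^esub>) \<in> M}" "b \<in> {a \<in> A_p p. (a, \<one>\<^bsub>PSL2 p\<^esub>) \<in> M}"
    for a b
    using that M.m_closed[of "(a, \<one>\<^bsub>PSL2 p\<^esub>)" "(b, \<one>\<^bsub>PSL2 p\<^esub>)"] G_p_mult_A[of a b] A_p_add[of a p b]
    by simp
  moreover have "perm_act p h a \<in> {a \<in> A_p p. (a, \<one>\<^bsub>PSL2 p\<^esub>) \<in> M}"
    if "h \<in> carrier (PSL2 p)" "a \<in> {a \<in> A_p p. (a, \<one>\<^bsub>PSL2 p\<^esub>) \<in> M}" for h a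
  proof -
    have g: "((\<lambda>i. 0), h) \<in> carrier (G_p p)" using that(1) by (simp add: G_p_carrier A_p_zero)
    have "(a, \<one>\<^bsub>PSL2 p\<^esub>) \<in> M" "a \<in> A_p p" using that(2) by simp_all
    from M.inv_op_closed2[OF g this(1)] G_p_conj_A[OF g this(2)] this(2) that(1)
    show ?thesis by (simp add: perm_act_closed)
  qed
  moreover have "(\<lambda>i. 0) \<in> {a \<in> A_p p. (a, \<one>\<^bsub>PSL2 p\<^esub>) \<in> M}"
    using M.one_closed A_p_zero by (simp add: G_p_one)
  ultimately show ?thesis by (auto simp: A_p_submodule_def add_closed_mod3_def)
qed

lemma normal_fixes_A_if_meets_A_trivially:
  assumes M: "M \<lhd> G_p p" and trivial: "\<forall>b \<in> A_p p. (b, \<one>\<^bsub>PSL2 p\<^esub>) \<in> M \<longrightarrow> b = (\<lambda>i. 0)"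
    and n: "(x, h) \<in> M" and a: "a \<in> A_p p"
  shows "perm_act p h a = a"
proof -
  interpret M: normal M "G_p p" by (rule M)
  define a' where "a' = (\<lambda>i. (- a i) mod 3)"
  have a': "a' \<in> A_p p" unfolding a'_def by (rule A_p_neg[OF a])
  have ag: "(a, \<one>\<^bsub>PSL2 p\<^esub>) \<in> carrier (G_p p)" and a'g: "(a', \<one>\<^bsub>PSL2 p\<^esub>) \<in> carrier (G_p p)"
    using a a' by (simp_all add: G_p_carrier)
  have ng: "(x, h) \<in> carrier (G_p p)" and h: "h \<in> carrier (PSL2 p)"
    using n M.subset by (auto simp: G_p_carrier)
  have "(a, \<one>\<^bsub>PSL2 p\<^esub>) \<otimes>\<^bsub>G_p p\<^esub> (x, h) \<otimes>\<^bsub>G_p p\<^esub> inv\<^bsub>G_p p\<^esub> (a, \<one>\<^bsub>PSL2 p\<^esub>)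
      \<otimes>\<^bsub>G_p p\<^esub> inv\<^bsub>G_p p\<^esub> (x, h) \<in> M"
    using M.m_closed[OF M.inv_op_closed2[OF ag n] M.m_inv_closed[OF n]] .
  also have "(a, \<one>\<^bsub>PSL2 p\<^esub>) \<otimes>\<^bsub>G_p p\<^esub> (x, h) \<otimes>\<^bsub>G_p p\<^esub> inv\<^bsub>G_p p\<^esub> (a, \<one>\<^bsub>PSL2 p\<^esub>)
      \<otimes>\<^bsub>G_p p\<^esub> inv\<^bsub>G_p p\<^esub> (x, h) =
      (a, \<one>\<^bsub>PSL2 p\<^esub>) \<otimes>\<^bsub>G_p p\<^esub> ((x, h) \<otimes>\<^bsub>G_p p\<^esub> (a', \<one>\<^bsub>PSL2 p\<^esub>) \<otimes>\<^bsub>G_p p\<^esub> inv\<^bsub>G_p p\<^esub> (x, h))"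
    using ag ng a'g by (simp add: G_p_inv_A[OF a] a'_def[symmetric] G.m_assoc)
  also have "\<dots> = ((\<lambda>i. (a i + perm_act p h a' i) mod 3), \<one>\<^bsub>PSL2 p\<^esub>)"
    by (simp add: G_p_conj_A[OF ng a'] G_p_mult_A[OF a perm_act_closed[OF h a']])
  finally have "(\<lambda>i. (a i + perm_act p h a' i) mod 3) = (\<lambda>i. 0)"
    using trivial A_p_add[OF a perm_act_closed[OF h a']] by simp
  moreover have "(a i + perm_act p h a' i) mod 3 = (a i - perm_act p h a i) mod 3" for i
    by (cases "i \<le> p") (simp_all add: perm_act_def a'_def mod_add_right_eq)
  ultimately have diff: "(a i - perm_act p h a i) mod 3 = 0" for i
    by metis
  have digits: "u = v" if "(u - v) mod 3 = 0" "0 \<le> u \<and> u < 3" "0 \<le> v \<and> v < 3" for u v :: int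
    using that by presburger
  have "a i = perm_act p h a i" for i
    using digits[OF diff[of i] A_p_range[OF a, of i] A_p_range[OF perm_act_closed[OF h a], of i]] .
  then show ?thesis by auto
qed

lemma PSL2_trivial_if_fixes_A:
  assumes h: "h \<in> carrier (PSL2 p)" and fixes_A: "\<forall>a \<in> A_p p. perm_act p h a = a"
  shows "h = \<one>\<^bsub>PSL2 p\<^esub>"
proof -
  have "psl_act p (inv\<^bsub>PSL2 p\<^esub> h) i = i" if i: "i \<le> p" for i
  proof -
    define m where "m = (if i = 0 then 1 else (0::nat))"
    have m: "m \<le> p" "m \<noteq> i" using p_gt_1 by (auto simp: m_def)
    define a where "a = (\<lambda>k. if k = i then 1 else if k = m then 2 else (0::int))"
    have "(\<Sum>k\<le>p. a k) = (\<Sum>k\<in>{i, m}. a k)"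
      by (rule sum.mono_neutral_right) (use i m in \<open>auto simp: a_def\<close>)
    then have "a \<in> A_p p" using i m by (intro A_pI) (auto simp: a_def)
    then have "a (psl_act p (inv\<^bsub>PSL2 p\<^esub> h) i) = a i"
      using fixes_A i by (metis perm_act_def)
    then show ?thesis using m by (auto simp: a_def split: if_splits)
  qed
  then have "inv\<^bsub>PSL2 p\<^esub> h = \<one>\<^bsub>PSL2 p\<^esub>" using psl_act_faithful h by simp
  then show ?thesis using h by simp
qed

lemma normal_trivial_if_meets_A_trivially:
  assumes M: "M \<lhd> G_p p" and trivial: "\<forall>a \<in> A_p p. (a, \<one>\<^bsub>PSL2 p\<^esub>) \<in> M \<longrightarrow> a = (\<lambda>i. 0)"
  shows "M = {\<one>\<^bsub>G_p p\<^esub>}"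
proof -
  have "n = \<one>\<^bsub>G_p p\<^esub>" if n: "n \<in> M" for n
  proof -
    have "n \<in> A_p p \<times> carrier (PSL2 p)"
      using n M normal_imp_subgroup subgroup.subset G_p_carrier by blast
    then obtain x h where n_eq: "n = (x, h)" and x: "x \<in> A_p p" and h: "h \<in> carrier (PSL2 p)"
      by blast
    have "h = \<one>\<^bsub>PSL2 p\<^esub>"
      using PSL2_trivial_if_fixes_A[OF h] normal_fixes_A_if_meets_A_trivially[OF M trivial] n n_eq
      by blast
    then show ?thesis using trivial x n n_eq by (simp add: G_p_one)
  qed
  then show ?thesis using M normal_imp_subgroup subgroup.one_closed by blast
qed

lemma normal_eq_carrier_if_not_in_A:
  assumes p: "5 < p" and M: "M \<lhd> G_p p" and A: "A_sub p \<subseteq> M" and not_A: "\<not> M \<subseteq> A_sub p"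
  shows "M = carrier (G_p p)"
proof -
  interpret M: normal M "G_p p" by (rule M)
  let ?lift = "\<lambda>X. ((\<lambda>i::nat. 0::int), pclass X)"
  have lift_carrier: "?lift X \<in> carrier (G_p p)" if "X \<in> carrier (SL2 p)" for X
    using that by (auto simp: G_p_carrier A_p_zero PSL2_carrier)
  have "group_hom (SL2 p) (G_p p) ?lift"
    by (auto simp: group_hom_def group_hom_axioms_def SL.group_axioms G.group_axioms hom_def
        lift_carrier G_p_mult_H PSL2_carrier PSL2_mult_pclass)
  then have Q: "{X \<in> carrier (SL2 p). ?lift X \<in> M} \<lhd> SL2 p"
    using M by (rule group_hom.normal_vimage)
  obtain x h where xh: "(x, h) \<in> M" "(x, h) \<notin> A_sub p" using not_A by auto
  then have x: "x \<in> A_p p" and h: "h \<in> carrier (PSL2 p)" "h \<noteq> \<one>\<^bsub>PSL2 p\<^esub>"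
    using M.subset by (auto simp: G_p_carrier A_sub_def)
  obtain X where X: "X \<in> carrier (SL2 p)" "h = pclass X" using h(1) PSL2_cases by blast
  have "inv\<^bsub>G_p p\<^esub> (x, \<one>\<^bsub>PSL2 p\<^esub>) \<otimes>\<^bsub>G_p p\<^esub> (x, h) \<in> M"
    using A x xh(1) by (auto simp: A_sub_def)
  then have "?lift X \<in> M"
    using x h X by (simp add: G_p_inv_A G_p_mult perm_act_one A_p_outside mod_simps)
  moreover have "X \<notin> centre_pm p" using X h(2) pclass_eq_one_iff by blast
  ultimately have SL: "{X \<in> carrier (SL2 p). ?lift X \<in> M} = carrier (SL2 p)"
    using normal_SL2_eq_carrier[OF p Q] X(1) by blast
  have "(y, k) \<in> M" if y: "y \<in> A_p p" and k: "k \<in> carrier (PSL2 p)" for y k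
  proof -
    obtain Y where "Y \<in> carrier (SL2 p)" "k = pclass Y" using k PSL2_cases by blast
    then have "(y, \<one>\<^bsub>PSL2 p\<^esub>) \<otimes>\<^bsub>G_p p\<^esub> ((\<lambda>i. 0), k) \<in> M"
      using SL A y by (auto simp: A_sub_def)
    then show ?thesis using G_p_mult_A_H y k by simp
  qed
  then show ?thesis using M.subset by (auto simp: G_p_carrier)
qed

end

context prime_1_mod_3
begin

theorem normal_G_p_cases:
  assumes M: "M \<lhd> G_p p"
  shows "M = {\<one>\<^bsub>G_p p\<^esub>} \<or> M = A_sub p \<or> M = carrier (G_p p)"
proof (cases "\<forall>a \<in> A_p p. (a, \<one>\<^bsub>PSL2 p\<^esub>) \<in> M \<longrightarrow> a = (\<lambda>i. 0)")
  case True
  then show ?thesis using normal_trivial_if_meets_A_trivially[OF M] by blast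
next
  case False
  then obtain a where "a \<in> {a \<in> A_p p. (a, \<one>\<^bsub>PSL2 p\<^esub>) \<in> M}" "a \<noteq> (\<lambda>i. 0)" by blast
  then have "{a \<in> A_p p. (a, \<one>\<^bsub>PSL2 p\<^esub>) \<in> M} = A_p p"
    using submodule_eq_A_p[OF submodule_of_normal[OF M]] by blast
  then have "A_sub p \<subseteq> M" by (auto simp: A_sub_def)
  then show ?thesis using normal_eq_carrier_if_not_in_A[OF p_gt_5 M] by blast
qed

end

theorem lemma3p2:
  fixes p :: nat and K :: "('k, 'm) monoid_scheme"
    and N :: "(((nat \<Rightarrow> int) \<times> mat2 set) \<times> 'k) set"
  assumes "prime p" and "p mod 3 = 1"
    and "group K"
    and "subgroup N (G_p p \<times>\<times> K)"
    and "\<forall>g \<in> carrier (G_p p). \<forall>n \<in> N.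
           (g, \<one>\<^bsub>K\<^esub>) \<otimes>\<^bsub>G_p p \<times>\<times> K\<^esub> n \<otimes>\<^bsub>G_p p \<times>\<times> K\<^esub> inv\<^bsub>G_p p \<times>\<times> K\<^esub> (g, \<one>\<^bsub>K\<^esub>) \<in> N"
  shows "\<exists>L. subgroup L K \<and>
           (N = {\<one>\<^bsub>G_p p\<^esub>} \<times> L \<or> N = A_sub p \<times> L \<or> N = carrier (G_p p) \<times> L)"
proof -
  interpret prime_1_mod_3 p
    using assms(1,2) by unfold_locales
  interpret left_normalized_subgroup "G_p p" K N
    using G_p_group assms(3-5)
    by (simp add: left_normalized_subgroup_def left_normalized_subgroup_axioms_def)
  show ?thesis
    by (rule product_form_if_normal_subgroups_chain[OF normal_G_p_cases A_sub_normal
          A_noncentral G_p_commutator_notin_A])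
qed

end
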